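(* Let $\{(S_n,J_n)\}$ be a discrete-time Markov additive process as in the context, satisfying the assumptions listed there. Let $\overline{\boldsymbol{\beta}}(x)=\int_x^\infty d\boldsymbol{\beta}(y)$ and $\overline{\boldsymbol{H}}(x)=\int_x^\infty d\boldsymbol{H}(y)$ for $x\in\mathbb{R}$, and suppose there exist $\tilde c\in[0,\infty)$, a nonnegative random variable $Y\in\mathcal{S}$, a finite nonnegative row vector $\widetilde{\boldsymbol{\beta}}$ and a finite nonnegative matrix $\widetilde{\boldsymbol{H}}$ such that, entrywise, $$\limsup_{x\to\infty}\frac{\overline{\boldsymbol{\beta}}(x)}{\mathbb{P}(Y>x)}\le\tilde c\,\widetilde{\boldsymbol{\beta}},\qquad \limsup_{x\to\infty}\frac{\overline{\boldsymbol{H}}(x)}{\mathbb{P}(Y>x)}\le\tilde c\,\widetilde{\boldsymbol{H}}.$$ Then there is a finite constant $C>0$ such that $\limsup_{x\to\infty}\mathbb{P}(\Delta B_n>x)/\mathbb{P}(Y>x)\le\tilde c\,C$ for $n=0,1$.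
   Context: Let $\mathbb{D}=\{0,\dots,d-1\}$. $\{J_n\}$ is a Markov chain on $\mathbb{D}$ and $X_0,X_1,\dots$ are real r.v.s with $\mathbb{P}(X_0\le x,J_0=i)=\beta_i(x)$ and, conditionally on the past up to time $n$ and on $J_n=i$, $\mathbb{P}(X_{n+1}\le x,J_{n+1}=j\mid\cdot)=H_{i,j}(x)$, with $\sum_i\beta_i(\infty)=1$, $\sum_jH_{i,j}(\infty)=1$. $S_n=\sum_{\nu=0}^nX_\nu$; $\boldsymbol{\beta}(x)=(\beta_i(x))$, $\boldsymbol{H}(x)=(H_{i,j}(x))$. Assumptions: $\boldsymbol{H}(\infty)$ irreducible stochastic; $\boldsymbol{\varpi}\int x\,d\boldsymbol{H}(x)\mathbf{e}\in(0,\infty)$ with $\boldsymbol{\varpi}$ the stationary vector of $\boldsymbol{H}(\infty)$. Let $0\le\tau_0<\tau_1<\cdots$ be the successive hitting times of state $0$ by $\{J_n\}$, and set $B(t)=S_{\lfloor t\rfloor}$, $\Delta B_0=B(\tau_0)=S_{\tau_0}$, $\Delta B_1=S_{\tau_1}-S_{\tau_0}$. Class $\mathcal{S}$: nonnegative $X$ with $\mathbb{P}(X>x)>0$ for all $x\ge0$ and $\mathbb{P}(X_1+X_2>x)\sim2\mathbb{P}(X>x)$ for independent copies $X_1,X_2$ of $X$. *)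

theory Defs
  imports "HOL-Probability.Probability" "HOL-Library.Landau_Symbols"
begin

text \<open>Square matrices indexed by the state space D = {0..<d}, as functions.\<close>

fun mat_pow :: "nat \<Rightarrow> (nat \<Rightarrow> nat \<Rightarrow> real) \<Rightarrow> nat \<Rightarrow> nat \<Rightarrow> nat \<Rightarrow> real" where
  "mat_pow d P 0 i j = (if i = j then 1 else 0)"
| "mat_pow d P (Suc n) i j = (\<Sum>k<d. mat_pow d P n i k * P k j)"

definition stochastic_mat :: "nat \<Rightarrow> (nat \<Rightarrow> nat \<Rightarrow> real) \<Rightarrow> bool" where
  "stochastic_mat d P \<longleftrightarrow> (\<forall>i<d. \<forall>j<d. 0 \<le> P i j) \<and> (\<forall>i<d. (\<Sum>j<d. P i j) = 1)"

definition irreducible_mat :: "nat \<Rightarrow> (nat \<Rightarrow> nat \<Rightarrow> real) \<Rightarrow> bool" where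
  "irreducible_mat d P \<longleftrightarrow> (\<forall>i<d. \<forall>j<d. \<exists>n. 0 < mat_pow d P n i j)"

definition stationary_vec :: "nat \<Rightarrow> (nat \<Rightarrow> nat \<Rightarrow> real) \<Rightarrow> (nat \<Rightarrow> real) \<Rightarrow> bool" where
  "stationary_vec d P w \<longleftrightarrow> (\<forall>i<d. 0 \<le> w i) \<and> (\<Sum>i<d. w i) = 1
      \<and> (\<forall>j<d. (\<Sum>i<d. w i * P i j) = w j)"

text \<open>Class S (subexponential), stated for the law F of a random variable Y.\<close>
definition subexponential :: "real measure \<Rightarrow> bool" where
  "subexponential F \<longleftrightarrow> prob_space F \<and> sets F = sets borel
     \<and> measure F {..<0} = 0
     \<and> (\<forall>x\<ge>0. 0 < measure F {x<..})
     \<and> (\<lambda>x. measure (F \<star> F) {x<..}) \<sim>[at_top] (\<lambda>x. 2 * measure F {x<..})"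

text \<open>Markov additive process on D = {0..<d}: finite-dimensional distributions of
  (X_n, J_n) given by the initial kernel beta and the transition kernel H.\<close>
definition MAP :: "'a measure \<Rightarrow> nat \<Rightarrow> (nat \<Rightarrow> real measure) \<Rightarrow> (nat \<Rightarrow> nat \<Rightarrow> real measure)
     \<Rightarrow> (nat \<Rightarrow> 'a \<Rightarrow> real) \<Rightarrow> (nat \<Rightarrow> 'a \<Rightarrow> nat) \<Rightarrow> bool" where
  "MAP M d \<beta> H X J \<longleftrightarrow> prob_space M
     \<and> (\<forall>i<d. sets (\<beta> i) = sets borel \<and> finite_measure (\<beta> i))
     \<and> (\<forall>i<d. \<forall>j<d. sets (H i j) = sets borel \<and> finite_measure (H i j))
     \<and> (\<Sum>i<d. measure (\<beta> i) UNIV) = 1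
     \<and> (\<forall>i<d. (\<Sum>j<d. measure (H i j) UNIV) = 1)
     \<and> (\<forall>n. X n \<in> borel_measurable M \<and> J n \<in> measurable M (count_space UNIV))
     \<and> (\<forall>n. \<forall>\<omega>\<in>space M. J n \<omega> < d)
     \<and> (\<forall>n (is :: nat \<Rightarrow> nat) (A :: nat \<Rightarrow> real set).
          (\<forall>k\<le>n. is k < d \<and> A k \<in> sets borel) \<longrightarrow>
          measure M {\<omega>\<in>space M. \<forall>k\<le>n. J k \<omega> = is k \<and> X k \<omega> \<in> A k}
            = measure (\<beta> (is 0)) (A 0) * (\<Prod>k\<in>{1..n}. measure (H (is (k - 1)) (is k)) (A k)))"

definition partial_sum :: "(nat \<Rightarrow> 'a \<Rightarrow> real) \<Rightarrow> nat \<Rightarrow> 'a \<Rightarrow> real" where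
  "partial_sum X n \<omega> = (\<Sum>\<nu>\<le>n. X \<nu> \<omega>)"

definition tau0 :: "(nat \<Rightarrow> 'a \<Rightarrow> nat) \<Rightarrow> 'a \<Rightarrow> nat" where
  "tau0 J \<omega> = (LEAST n. J n \<omega> = 0)"

definition tau1 :: "(nat \<Rightarrow> 'a \<Rightarrow> nat) \<Rightarrow> 'a \<Rightarrow> nat" where
  "tau1 J \<omega> = (LEAST n. tau0 J \<omega> < n \<and> J n \<omega> = 0)"

definition DeltaB :: "(nat \<Rightarrow> 'a \<Rightarrow> real) \<Rightarrow> (nat \<Rightarrow> 'a \<Rightarrow> nat) \<Rightarrow> nat \<Rightarrow> 'a \<Rightarrow> real" where
  "DeltaB X J m \<omega> = (if m = 0 then partial_sum X (tau0 J \<omega>) \<omega>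
                      else partial_sum X (tau1 J \<omega>) \<omega> - partial_sum X (tau0 J \<omega>) \<omega>)"

end

theory Submission
  imports Defs
begin

text \<open>Conditionally on the path of the modulating chain, the increments are independent with the
  laws of the kernels \<open>\<beta>\<close> and \<open>H\<close>. By the tail hypotheses each normalised kernel is stochastically
  dominated by a constant plus a sum of \<open>k\<close> independent copies of \<open>\<xi> Y\<close>, where \<open>\<xi>\<close> is a Bernoulli
  variable independent of \<open>Y\<close>; for a sum of \<open>n\<close> such copies, subexponentiality of \<open>Y\<close> gives Kesten's
  bound \<open>K (1 + \<epsilon>)\<^sup>n P(Y > x)\<close> for every \<open>\<epsilon> > 0\<close>. Irreducibility makes the probability that the chain
  stays away from state \<open>0\<close> for \<open>n\<close> steps decay geometrically in \<open>n\<close>, which beats the factor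
  \<open>(1 + \<epsilon>)\<^sup>n\<close>, so \<open>P(\<Delta>B\<^sub>m > x)\<close> is bounded by a convergent series of multiples of \<open>P(Y > x)\<close>.
  When \<open>c = 0\<close> the Bernoulli parameter can be taken arbitrarily small, making the bound \<open>o(P(Y > x))\<close>.\<close>

section \<open>Elementary estimates for series\<close>

lemma power_div_le_root_power:
  fixes q :: real
  assumes q: "0 < q" "q \<le> 1" and N: "1 \<le> N"
  shows "q ^ ((l - 1) div N) \<le> root N q ^ l / q"
proof -
  define Q where "Q = root N q"
  have Q: "0 < Q" "Q \<le> 1" unfolding Q_def using q N real_root_le_iff[of N q 1]
    by (auto simp: real_root_gt_zero)
  have QN: "Q ^ N = q" unfolding Q_def using q N by (simp add: real_root_pow_pos2)
  define m where "m = (l - 1) div N"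
  have "l \<le> N * m + N"
  proof -
    have r: "(l - 1) mod N < N" using N by simp
    have e: "l - 1 = N * m + (l - 1) mod N" unfolding m_def by simp
    have "l - 1 < N * (m + 1)" using r e by (simp add: algebra_simps)
    then show ?thesis by simp
  qed
  then have "Q ^ (N * m + N) \<le> Q ^ l" using Q by (intro power_decreasing) auto
  also have "Q ^ (N * m + N) = q ^ m * q" by (simp add: power_add power_mult QN)
  finally show ?thesis unfolding m_def[symmetric] Q_def[symmetric] using q by (simp add: field_simps)
qed

lemma geometric_majorant:
  fixes f :: "nat \<Rightarrow> real"
  assumes f0: "\<And>l. 0 \<le> f l" and fb: "\<And>l. f l \<le> A * r ^ l" and r: "0 \<le> r" "r < 1"
  shows "summable f" "(\<Sum>l. f l) \<le> A / (1 - r)"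
proof -
  have sg: "summable (\<lambda>l. A * r ^ l)" using r by (intro summable_mult summable_geometric) auto
  show sf: "summable f" by (rule summable_comparison_test[OF _ sg]) (use f0 fb in auto)
  have "(\<Sum>l. f l) \<le> (\<Sum>l. A * r ^ l)" by (rule suminf_le[OF fb sf sg])
  also have "\<dots> = A / (1 - r)" using r by (simp add: suminf_mult suminf_geometric)
  finally show "(\<Sum>l. f l) \<le> A / (1 - r)" .
qed

lemma exists_small_growth:
  fixes Q :: real and m :: nat
  assumes "0 < Q" "Q < 1"
  obtains e where "0 < e" "Q * (1 + e) ^ m < 1"
proof -
  have "((\<lambda>e. (1 + e) ^ m) \<longlongrightarrow> (1 + 0) ^ m) (at_right (0::real))"
    by (intro tendsto_intros)
  then have "eventually (\<lambda>e. (1 + e) ^ m < 1 / Q) (at_right (0::real))"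
    using assms by (intro order_tendstoD(2)) (auto simp: field_simps)
  moreover have "eventually (\<lambda>e. 0 < e) (at_right (0::real))" by (rule eventually_at_right_less)
  ultimately have "eventually (\<lambda>e. 0 < e \<and> (1 + e) ^ m < 1 / Q) (at_right (0::real))"
    by eventually_elim auto
  moreover have "at_right (0::real) \<noteq> bot" using trivial_limit_at_right_real
    by (simp add: trivial_limit_def)
  ultimately obtain e where "0 < e" "(1 + e) ^ m < 1 / Q"
    using eventually_happens' by blast
  then show ?thesis using assms by (intro that[of e]) (auto simp: field_simps)
qed

lemma suminf_min_le_split:
  fixes f g :: "nat \<Rightarrow> real"
  assumes f0: "\<And>l. 0 \<le> f l" and g0: "\<And>l. 0 \<le> g l" and fb: "\<And>l. f l \<le> A * r ^ l"
    and r: "0 \<le> r" "r < 1" and gb: "\<And>l. l < L \<Longrightarrow> g l \<le> D"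
  shows "(\<Sum>l. min (f l) (g l)) \<le> A * r ^ L / (1 - r) + L * D"
proof -
  have sm: "summable (\<lambda>l. min (f l) (g l))"
    by (rule geometric_majorant(1)[OF _ _ r]) (use f0 g0 fb in \<open>auto intro: min.coboundedI1\<close>)
  have "(\<Sum>l. min (f (l + L)) (g (l + L))) \<le> (A * r ^ L) / (1 - r)"
  proof (rule geometric_majorant(2)[OF _ _ r])
    show "min (f (l + L)) (g (l + L)) \<le> A * r ^ L * r ^ l" for l
      using fb[of "l + L"] by (simp add: power_add mult_ac min.coboundedI1)
  qed (use f0 g0 in auto)
  moreover have "(\<Sum>l<L. min (f l) (g l)) \<le> (\<Sum>l<L. D)"
    by (intro sum_mono min.coboundedI2 gb) auto
  ultimately show ?thesis
    using suminf_split_initial_segment[OF sm, of L] by simp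
qed

lemma finite_pos_lower_bound:
  fixes A :: "real set"
  assumes "finite A"
  obtains m where "0 < m" "\<And>x. x \<in> A \<Longrightarrow> 0 < x \<Longrightarrow> m \<le> x"
proof (rule that)
  show "0 < Min (insert 1 {x\<in>A. 0 < x})" using assms by (subst Min_gr_iff) auto
  show "Min (insert 1 {x\<in>A. 0 < x}) \<le> x" if "x \<in> A" "0 < x" for x
    using assms that by (intro Min_le) auto
qed

lemma (in finite_measure) measure_le_suminf_cover:
  assumes cover: "A \<subseteq> N \<union> (\<Union>i. V i)" and N: "N \<in> sets M" "measure M N = 0"
    and V: "\<And>i. V i \<in> sets M" and f: "\<And>i. measure M (V i) \<le> f i" and sf: "summable f"
  shows "measure M A \<le> (\<Sum>i. f i)"
proof -
  have sV: "summable (\<lambda>i. measure M (V i))"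
    by (rule summable_comparison_test[OF _ sf]) (use f in auto)
  have "measure M A \<le> measure M (N \<union> (\<Union>i. V i))"
    using cover N V by (cases "A \<in> sets M") (auto intro!: finite_measure_mono simp: measure_notin_sets)
  also have "\<dots> \<le> measure M N + measure M (\<Union>i. V i)"
    using N V by (intro measure_Un_le) auto
  also have "\<dots> \<le> (\<Sum>i. measure M (V i))"
    using N V sV by (simp add: finite_measure_subadditive_countably image_subset_iff)
  also have "\<dots> \<le> (\<Sum>i. f i)" by (rule suminf_le[OF f sV sf])
  finally show ?thesis .
qed

lemma sum_atMost_split: "a \<le> n \<Longrightarrow> (\<Sum>i\<le>n. f i) = (\<Sum>i\<le>a. f i) + (\<Sum>i\<in>{Suc a..n}. f i :: real)"
proof -
  assume "a \<le> n"
  then have "{..n} = {..a} \<union> {Suc a..n}" by auto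
  then show ?thesis by (simp add: sum.union_disjoint)
qed

section \<open>Thinned sums of nonnegative random variables\<close>

definition tail :: "real measure \<Rightarrow> real \<Rightarrow> real" where
  "tail F x = measure F {x<..}"

definition dirac_tail :: "real \<Rightarrow> real" where
  "dirac_tail x = (if x < 0 then 1 else 0)"

text \<open>\<open>thin_tail F B n\<close> is the tail function of \<open>\<xi>\<^sub>1 Y\<^sub>1 + \<dots> + \<xi>\<^sub>n Y\<^sub>n\<close> with independent
  \<open>Y\<^sub>i \<sim> F\<close> and \<open>\<xi>\<^sub>i \<sim> Bernoulli B\<close>: \<open>thin_conv F B\<close> maps the tail function of a variable \<open>Z\<close>
  to that of \<open>Z + \<xi> Y\<close>. Increments of the process are dominated by such sums, shifted by a constant.\<close>

definition thin_conv :: "real measure \<Rightarrow> real \<Rightarrow> (real \<Rightarrow> real) \<Rightarrow> real \<Rightarrow> real" where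
  "thin_conv F B g x = (1 - B) * g x + B * (\<integral>y. g (x - y) \<partial>F)"

definition thin_tail :: "real measure \<Rightarrow> real \<Rightarrow> nat \<Rightarrow> real \<Rightarrow> real" where
  "thin_tail F B n = (thin_conv F B ^^ n) dirac_tail"

definition unit_antimono :: "(real \<Rightarrow> real) \<Rightarrow> bool" where
  "unit_antimono g \<longleftrightarrow> antimono g \<and> (\<forall>x. 0 \<le> g x \<and> g x \<le> 1)"

definition nonneg_tail_fn :: "(real \<Rightarrow> real) \<Rightarrow> bool" where
  "nonneg_tail_fn g \<longleftrightarrow> unit_antimono g \<and> (\<forall>x<0. g x = 1)"

definition conv_fn :: "real measure \<Rightarrow> (real \<Rightarrow> real) \<Rightarrow> real \<Rightarrow> real" where
  "conv_fn \<mu> g z = (\<integral>s. g (z - s) \<partial>\<mu>)"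

lemma nonneg_tail_fn_unit_antimono: "nonneg_tail_fn g \<Longrightarrow> unit_antimono g" by (simp add: nonneg_tail_fn_def)

lemma unit_antimono_borel_measurable: "unit_antimono g \<Longrightarrow> g \<in> borel_measurable borel"
proof -
  assume "unit_antimono g"
  then have "mono (\<lambda>x. - g x)" unfolding unit_antimono_def antimono_def mono_def by auto
  then have "(\<lambda>x. - (- g x)) \<in> borel_measurable borel"
    by (intro borel_measurable_uminus borel_measurable_mono)
  then show ?thesis by simp
qed

context real_distribution
begin

lemma prob_UNIV [simp]: "prob UNIV = 1"
  using prob_space by simp

lemma unit_antimono_integrable: "unit_antimono g \<Longrightarrow> integrable M (\<lambda>y. g (x - y))"
proof -
  assume g: "unit_antimono g"
  note [measurable] = unit_antimono_borel_measurable[OF g]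
  show ?thesis
    using g unfolding unit_antimono_def
    by (intro integrable_const_bound[where B=1]) auto
qed

lemma unit_antimono_integral_bounds:
  assumes "unit_antimono g"
  shows "0 \<le> (\<integral>y. g (x - y) \<partial>M)" "(\<integral>y. g (x - y) \<partial>M) \<le> 1"
proof -
  show "0 \<le> (\<integral>y. g (x - y) \<partial>M)"
    by (intro Bochner_Integration.integral_nonneg) (use assms in \<open>auto simp: unit_antimono_def\<close>)
  have "(\<integral>y. g (x - y) \<partial>M) \<le> (\<integral>y. 1 \<partial>M)"
    using assms
    by (intro integral_mono[OF unit_antimono_integrable[OF assms]]) (auto simp: unit_antimono_def)
  then show "(\<integral>y. g (x - y) \<partial>M) \<le> 1" by simp
qed

lemma unit_antimono_integral_mono:
  assumes "unit_antimono g" "unit_antimono h" "\<And>x. g x \<le> h x"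
  shows "(\<integral>y. g (x - y) \<partial>M) \<le> (\<integral>y. h (x - y) \<partial>M)"
  using assms by (intro integral_mono unit_antimono_integrable) auto

lemma unit_antimono_integral:
  assumes "unit_antimono g"
  shows "unit_antimono (\<lambda>x. \<integral>y. g (x - y) \<partial>M)"
  unfolding unit_antimono_def
proof (intro conjI allI)
  show "antimono (\<lambda>x. \<integral>y. g (x - y) \<partial>M)"
    unfolding antimono_def
  proof safe
    fix x x' :: real assume "x \<le> x'"
    show "(\<integral>y. g (x' - y) \<partial>M) \<le> (\<integral>y. g (x - y) \<partial>M)"
      using assms \<open>x \<le> x'\<close>
      by (intro integral_mono unit_antimono_integrable) (auto simp: unit_antimono_def antimono_def)
  qed
qed (use unit_antimono_integral_bounds[OF assms] in auto)

end

locale nonneg_distribution = real_distribution F for F +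
  assumes nonneg: "measure F {..<0} = 0"
begin

lemma AE_nonneg: "AE y in F. 0 \<le> y"
proof -
  have "emeasure F {..<0} = 0" using nonneg emeasure_eq_measure by simp
  then show ?thesis
    by (intro AE_I[of _ _ "{..<0}"]) auto
qed

lemma tail_le_1: "tail F x \<le> 1" unfolding tail_def by simp
lemma tail_nonneg: "0 \<le> tail F x" unfolding tail_def by simp
lemma tail_antimono: "x \<le> y \<Longrightarrow> tail F y \<le> tail F x"
  unfolding tail_def by (intro finite_measure_mono) auto
lemma tail_eq_1_minus_cdf: "tail F x = 1 - cdf F x"
proof -
  have "measure F {x<..} = measure F (space F - {..x})"
    by (intro arg_cong[where f="measure F"]) auto
  also have "\<dots> = 1 - measure F {..x}"
    by (subst prob_compl) auto
  finally show ?thesis unfolding tail_def cdf_def2 .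
qed
lemma tail_neg: "x < 0 \<Longrightarrow> tail F x = 1"
proof -
  assume "x < 0"
  have "cdf F x \<le> measure F {..<0}" unfolding cdf_def2
    using \<open>x<0\<close> by (intro finite_measure_mono) auto
  then show ?thesis using nonneg cdf_nonneg[of x] tail_eq_1_minus_cdf by simp
qed
lemma tail_tendsto_0: "(tail F \<longlongrightarrow> 0) at_top"
proof -
  have "((\<lambda>x. 1 - cdf F x) \<longlongrightarrow> 1 - 1) at_top"
    by (intro tendsto_diff tendsto_const cdf_lim_at_top_prob)
  then show ?thesis unfolding tail_eq_1_minus_cdf[abs_def] by simp
qed

lemma nonneg_tail_fn_borel_measurable: "nonneg_tail_fn g \<Longrightarrow> g \<in> borel_measurable borel"
  by (simp add: unit_antimono_borel_measurable nonneg_tail_fn_def)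

lemma nonneg_tail_fn_integrable: "nonneg_tail_fn g \<Longrightarrow> integrable F (\<lambda>y. g (x - y))"
  by (simp add: unit_antimono_integrable nonneg_tail_fn_def)

lemma nonneg_tail_fn_integral_bounds:
  assumes "nonneg_tail_fn g"
  shows "0 \<le> (\<integral>y. g (x - y) \<partial>F)" "(\<integral>y. g (x - y) \<partial>F) \<le> 1"
  using unit_antimono_integral_bounds assms nonneg_tail_fn_def by auto

lemma nonneg_tail_fn_integral_neg:
  assumes "nonneg_tail_fn g" "x < 0"
  shows "(\<integral>y. g (x - y) \<partial>F) = 1"
proof -
  have "(\<integral>y. g (x - y) \<partial>F) = (\<integral>y. 1 \<partial>F)"
    using AE_nonneg
    by (intro integral_cong_AE)
      (use assms nonneg_tail_fn_borel_measurable in \<open>auto simp: nonneg_tail_fn_def unit_antimono_def\<close>)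
  then show ?thesis by simp
qed

lemma nonneg_tail_fn_dirac_tail: "nonneg_tail_fn dirac_tail"
  unfolding nonneg_tail_fn_def unit_antimono_def dirac_tail_def antimono_def by auto

lemma unit_antimono_thin_conv:
  assumes g: "unit_antimono g" and B: "0 \<le> B" "B \<le> 1"
  shows "unit_antimono (thin_conv F B g)"
proof -
  have am: "unit_antimono (\<lambda>x. \<integral>y. g (x - y) \<partial>F)" by (rule unit_antimono_integral[OF g])
  show ?thesis unfolding unit_antimono_def
  proof (intro conjI allI)
    show "antimono (thin_conv F B g)" unfolding antimono_def thin_conv_def
      using am g B unfolding antimono_def unit_antimono_def
      by (auto intro!: add_mono mult_left_mono)
  next
    fix x
    have "0 \<le> g x" "g x \<le> 1" using g by (auto simp: unit_antimono_def)
    note i = unit_antimono_integral_bounds[OF g, of x]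
    show "0 \<le> thin_conv F B g x" unfolding thin_conv_def using B i \<open>0 \<le> g x\<close> by simp
    have "(1 - B) * g x + B * (\<integral>y. g (x - y) \<partial>F) \<le> (1 - B) * 1 + B * 1"
      using B i \<open>g x \<le> 1\<close> by (intro add_mono mult_left_mono) auto
    then show "thin_conv F B g x \<le> 1" unfolding thin_conv_def by simp
  qed
qed

lemma nonneg_tail_fn_thin_conv:
  assumes g: "nonneg_tail_fn g" and B: "0 \<le> B" "B \<le> 1"
  shows "nonneg_tail_fn (thin_conv F B g)"
  unfolding nonneg_tail_fn_def
proof (intro conjI allI impI)
  show "unit_antimono (thin_conv F B g)" using unit_antimono_thin_conv g B by (simp add: nonneg_tail_fn_def)
  fix x :: real assume "x < 0"
  then show "thin_conv F B g x = 1" unfolding thin_conv_def using g nonneg_tail_fn_integral_neg[OF g \<open>x<0\<close>]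
    by (simp add: nonneg_tail_fn_def unit_antimono_def algebra_simps)
qed

lemma nonneg_tail_fn_thin_tail: "0 \<le> B \<Longrightarrow> B \<le> 1 \<Longrightarrow> nonneg_tail_fn (thin_tail F B n)"
  by (induction n) (auto simp: thin_tail_def nonneg_tail_fn_dirac_tail nonneg_tail_fn_thin_conv)

lemma thin_tail_Suc: "thin_tail F B (Suc n) = thin_conv F B (thin_tail F B n)"
  by (simp add: thin_tail_def)

lemma thin_conv_mono:
  assumes "unit_antimono g" "unit_antimono h" "\<And>x. g x \<le> h x" "0 \<le> B" "B \<le> 1"
  shows "thin_conv F B g x \<le> thin_conv F B h x"
  unfolding thin_conv_def using assms unit_antimono_integral_mono[OF assms(1-3)]
  by (intro add_mono mult_left_mono) auto

lemma nonneg_tail_fn_tail: "nonneg_tail_fn (tail F)"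
  unfolding nonneg_tail_fn_def unit_antimono_def antimono_def
  using tail_antimono tail_nonneg tail_le_1 tail_neg by auto

lemma convolution_tail: "measure (F \<star> F) {x<..} = (\<integral>y. tail F (x - y) \<partial>F)"
proof -
  have fm: "finite_measure F" by (simp add: finite_measure_axioms)
  have "emeasure (F \<star> F) {x<..} = (\<integral>\<^sup>+y. emeasure F {a. a + y \<in> {x<..}} \<partial>F)"
    by (rule convolution_emeasure) (auto simp: fm)
  also have "\<dots> = (\<integral>\<^sup>+y. ennreal (tail F (x - y)) \<partial>F)"
  proof (intro nn_integral_cong)
    fix y
    have "{a. a + y \<in> {x<..}} = {x - y<..}" by auto
    then show "emeasure F {a. a + y \<in> {x<..}} = ennreal (tail F (x - y))"
      by (simp add: tail_def emeasure_eq_measure)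
  qed
  also have "\<dots> = ennreal (\<integral>y. tail F (x - y) \<partial>F)"
    by (intro nn_integral_eq_integral nonneg_tail_fn_integrable nonneg_tail_fn_tail)
      (auto simp: tail_nonneg)
  finally have "emeasure (F \<star> F) {x<..} = ennreal (\<integral>y. tail F (x - y) \<partial>F)" .
  moreover have "finite_measure (F \<star> F)"
    by (intro convolution_finite fm) auto
  ultimately show ?thesis
    using nonneg_tail_fn_integral_bounds(1)[OF nonneg_tail_fn_tail]
    by (simp add: finite_measure.emeasure_eq_measure)
qed

lemma integral_dirac_tail_shift: "(\<integral>y. dirac_tail (x - y) \<partial>F) = tail F x"
proof -
  have "(\<integral>y. dirac_tail (x - y) \<partial>F) = (\<integral>y. indicator {x<..} y \<partial>F)"
    by (intro Bochner_Integration.integral_cong) (auto simp: dirac_tail_def indicator_def)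
  then show ?thesis by (simp add: tail_def)
qed

lemma convolution_tail_lower:
  assumes "t \<le> x"
  shows "tail F x + tail F x * (1 - tail F t) + tail F (x - t) * (tail F t - tail F x)
           \<le> (\<integral>y. tail F (x - y) \<partial>F)"
proof -
  have i1: "integrable F (\<lambda>y. dirac_tail (x - y))"
    by (intro nonneg_tail_fn_integrable nonneg_tail_fn_dirac_tail)
  have i2: "integrable F (\<lambda>y. tail F x * indicator {..t} y)"
    by (intro integrable_mult_right integrable_real_indicator)
      (auto simp: emeasure_finite less_top[symmetric])
  have i3: "integrable F (\<lambda>y. tail F (x - t) * indicator {t<..x} y)"
    by (intro integrable_mult_right integrable_real_indicator)
      (auto simp: emeasure_finite less_top[symmetric])
  have m1: "measure F {..t} = 1 - tail F t"
  proof -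
    have "measure F {..t} = measure F (space F - {t<..})" by (intro arg_cong[where f="measure F"]) auto
    also have "\<dots> = 1 - tail F t" by (subst prob_compl) (auto simp: tail_def)
    finally show ?thesis .
  qed
  have m2: "measure F {t<..x} = tail F t - tail F x"
  proof -
    have "measure F {t<..x} = measure F ({t<..} - {x<..})" by (intro arg_cong[where f="measure F"]) auto
    also have "\<dots> = tail F t - tail F x" unfolding tail_def
      by (subst finite_measure_Diff) (use assms in auto)
    finally show ?thesis .
  qed
  have "tail F x + tail F x * (1 - tail F t) + tail F (x - t) * (tail F t - tail F x)
      = (\<integral>y. dirac_tail (x - y) + tail F x * indicator {..t} y + tail F (x - t) * indicator {t<..x} y \<partial>F)"
    using i1 i2 i3 by (simp add: integral_dirac_tail_shift m1 m2)
  also have "\<dots> \<le> (\<integral>y. tail F (x - y) \<partial>F)"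
  proof (rule integral_mono_AE)
    show "AE y in F. dirac_tail (x - y) + tail F x * indicator {..t} y
        + tail F (x - t) * indicator {t<..x} y
                   \<le> tail F (x - y)"
      using AE_nonneg
    proof eventually_elim
      case (elim y)
      consider "x < y" | "y \<le> t" | "t < y" "y \<le> x" by linarith
      then show ?case
      proof cases
        case 1 then show ?thesis using tail_neg[of "x - y"] assms by (simp add: dirac_tail_def)
      next
        case 2 then show ?thesis using tail_antimono[of "x - y" x] elim assms by (simp add: dirac_tail_def)
      next
        case 3 then show ?thesis using tail_antimono[of "x - y" "x - t"] by (simp add: dirac_tail_def)
      qed
    qed
  qed (use i1 i2 i3 nonneg_tail_fn_integrable[OF nonneg_tail_fn_tail] in auto)
  finally show ?thesis .
qed

lemma thin_tail_neg: "0 \<le> B \<Longrightarrow> B \<le> 1 \<Longrightarrow> y < 0 \<Longrightarrow> thin_tail F B n y = 1"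
  using nonneg_tail_fn_thin_tail[of B n] by (simp add: nonneg_tail_fn_def)

lemma thin_tail_nonneg: "0 \<le> B \<Longrightarrow> B \<le> 1 \<Longrightarrow> 0 \<le> thin_tail F B n y"
  using nonneg_tail_fn_thin_tail[of B n] by (simp add: nonneg_tail_fn_def unit_antimono_def)

lemma thin_tail_le_1: "0 \<le> B \<Longrightarrow> B \<le> 1 \<Longrightarrow> thin_tail F B n y \<le> 1"
  using nonneg_tail_fn_thin_tail[of B n] by (simp add: nonneg_tail_fn_def unit_antimono_def)

lemma thin_tail_antimono: "0 \<le> B \<Longrightarrow> B \<le> 1 \<Longrightarrow> y \<le> y' \<Longrightarrow> thin_tail F B n y' \<le> thin_tail F B n y"
  using nonneg_tail_fn_thin_tail[of B n] by (simp add: nonneg_tail_fn_def unit_antimono_def antimono_def)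

lemma unit_antimono_conv_fn: "real_distribution \<mu> \<Longrightarrow> unit_antimono g \<Longrightarrow> unit_antimono (conv_fn \<mu> g)"
  unfolding conv_fn_def[abs_def] by (rule real_distribution.unit_antimono_integral)

lemma conv_fn_thin_conv:
  assumes mu: "real_distribution \<mu>" and g: "unit_antimono g"
  shows "conv_fn \<mu> (thin_conv F B g) z = thin_conv F B (conv_fn \<mu> g) z"
proof -
  interpret mu: real_distribution \<mu> by fact
  interpret pair_sigma_finite \<mu> F
    by (intro pair_sigma_finite.intro mu.sigma_finite_measure_axioms sigma_finite_measure_axioms)
  note [measurable] = unit_antimono_borel_measurable[OF g]
  have [measurable_cong]: "sets \<mu> = sets borel" by (simp add: mu.events_eq_borel)
  have meas: "(\<lambda>(s, y). g (z - s - y)) \<in> borel_measurable (\<mu> \<Otimes>\<^sub>M F)" by measurable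
  have h: "unit_antimono (\<lambda>w. \<integral>y. g (w - y) \<partial>F)" by (rule unit_antimono_integral[OF g])
  have "conv_fn \<mu> (thin_conv F B g) z = (\<integral>s. (1 - B) * g (z - s) + B * (\<integral>y. g (z - s - y) \<partial>F) \<partial>\<mu>)"
    unfolding conv_fn_def thin_conv_def ..
  also have "\<dots> = (1 - B) * (\<integral>s. g (z - s) \<partial>\<mu>) + B * (\<integral>s. (\<integral>y. g (z - s - y) \<partial>F) \<partial>\<mu>)"
    using mu.unit_antimono_integrable[OF g, of z] mu.unit_antimono_integrable[OF h, of z] by simp
  also have "(\<integral>s. (\<integral>y. g (z - s - y) \<partial>F) \<partial>\<mu>) = (\<integral>y. (\<integral>s. g (z - s - y) \<partial>\<mu>) \<partial>F)"
  proof (rule Fubini_integral[symmetric])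
    show "integrable (\<mu> \<Otimes>\<^sub>M F) (\<lambda>(s, y). g (z - s - y))"
      using g meas unfolding unit_antimono_def
      by (intro finite_measure.integrable_const_bound[where B=1] finite_measure_pair_measure
          mu.finite_measure_axioms finite_measure_axioms) auto
  qed
  also have "\<dots> = (\<integral>y. conv_fn \<mu> g (z - y) \<partial>F)"
    unfolding conv_fn_def by (simp add: algebra_simps)
  finally show ?thesis unfolding thin_conv_def conv_fn_def by simp
qed

lemma unit_antimono_thin_conv_pow: "unit_antimono g \<Longrightarrow> 0 \<le> B \<Longrightarrow> B \<le> 1
    \<Longrightarrow> unit_antimono ((thin_conv F B ^^ k) g)"
  by (induction k) (auto intro: unit_antimono_thin_conv)

lemma conv_fn_thin_conv_pow:
  assumes mu: "real_distribution \<mu>" and g: "unit_antimono g" and B: "0 \<le> B" "B \<le> 1"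
  shows "conv_fn \<mu> ((thin_conv F B ^^ k) g) = (thin_conv F B ^^ k) (conv_fn \<mu> g)"
proof (induction k)
  case 0 then show ?case by simp
next
  case (Suc k)
  show ?case
    by (simp add: fun_eq_iff conv_fn_thin_conv[OF mu unit_antimono_thin_conv_pow[OF g B]] Suc)
qed

lemma thin_conv_pow_mono:
  assumes "unit_antimono g" "unit_antimono h" "\<And>x. g x \<le> h x" "0 \<le> B" "B \<le> 1"
  shows "(thin_conv F B ^^ k) g x \<le> (thin_conv F B ^^ k) h x"
proof (induction k arbitrary: x)
  case 0 then show ?case using assms by simp
next
  case (Suc k)
  show ?case using Suc assms
    by (simp add: thin_conv_mono unit_antimono_thin_conv_pow)
qed

lemma thin_conv_shift: "thin_conv F B (\<lambda>z. g (z - c)) w = thin_conv F B g (w - c)"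
  unfolding thin_conv_def by (simp add: algebra_simps)

lemma thin_conv_pow_shift: "(thin_conv F B ^^ k) (\<lambda>z. g (z - c)) w = (thin_conv F B ^^ k) g (w - c)"
proof (induction k arbitrary: w)
  case 0 then show ?case by simp
next
  case (Suc k)
  have e: "(thin_conv F B ^^ k) (\<lambda>z. g (z - c)) = (\<lambda>z. (thin_conv F B ^^ k) g (z - c))"
    using Suc by (simp add: fun_eq_iff)
  have "(thin_conv F B ^^ Suc k) (\<lambda>z. g (z - c)) = thin_conv F B (\<lambda>z. (thin_conv F B ^^ k) g (z - c))"
    by (simp add: e)
  then show ?case by (simp add: thin_conv_shift)
qed

lemma unit_antimono_shift: "unit_antimono g \<Longrightarrow> unit_antimono (\<lambda>z. g (z - c))"
  unfolding unit_antimono_def antimono_def by auto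

end

lemma (in prob_space) indep_add_tail_le_conv_fn:
  assumes ind: "indep_var borel S borel X" and g: "unit_antimono g"
    and hX: "\<And>t. prob {\<omega>\<in>space M. t < X \<omega>} \<le> g (t - x0)"
  shows "prob {\<omega>\<in>space M. x < S \<omega> + X \<omega>} \<le> conv_fn (distr M borel S) g (x - x0)"
proof -
  have [measurable]: "S \<in> borel_measurable M" "X \<in> borel_measurable M"
    using indep_var_rv1[OF ind] indep_var_rv2[OF ind] by simp_all
  define \<mu> where "\<mu> = distr M borel S"
  define \<nu> where "\<nu> = distr M borel X"
  interpret mu: real_distribution \<mu> unfolding \<mu>_def by (rule real_distribution_distr) simp
  interpret nu: real_distribution \<nu> unfolding \<nu>_def by (rule real_distribution_distr) simp
  interpret pair_sigma_finite \<mu> \<nu>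
    by (intro pair_sigma_finite.intro mu.sigma_finite_measure_axioms nu.sigma_finite_measure_axioms)
  have joint: "\<mu> \<Otimes>\<^sub>M \<nu> = distr M (borel \<Otimes>\<^sub>M borel) (\<lambda>\<omega>. (S \<omega>, X \<omega>))"
    using ind unfolding indep_var_distribution_eq \<mu>_def \<nu>_def by simp
  define A where "A = {p \<in> space (borel \<Otimes>\<^sub>M borel). x < fst p + snd (p :: real \<times> real)}"
  have A[measurable]: "A \<in> sets (borel \<Otimes>\<^sub>M borel)" unfolding A_def by measurable
  have "emeasure M {\<omega>\<in>space M. x < S \<omega> + X \<omega>} = emeasure (\<mu> \<Otimes>\<^sub>M \<nu>) A"
    unfolding joint by (subst emeasure_distr[OF _ A])
      (auto simp: A_def space_pair_measure intro!: arg_cong[where f="emeasure M"])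
  also have "\<dots> = (\<integral>\<^sup>+s. emeasure \<nu> (Pair s -` A) \<partial>\<mu>)"
    by (rule nu.emeasure_pair_measure_alt) (simp add: A)
  also have "\<dots> \<le> (\<integral>\<^sup>+s. ennreal (g (x - x0 - s)) \<partial>\<mu>)"
  proof (rule nn_integral_mono)
    fix s
    have "emeasure \<nu> (Pair s -` A) = ennreal (prob {\<omega>\<in>space M. x - s < X \<omega>})"
      unfolding \<nu>_def by (subst emeasure_distr)
        (auto simp: A_def space_pair_measure emeasure_eq_measure intro!: arg_cong[where f=prob])
    also have "\<dots> \<le> ennreal (g (x - x0 - s))"
      using hX[of "x - s"] by (intro ennreal_leI) (simp add: algebra_simps)
    finally show "emeasure \<nu> (Pair s -` A) \<le> ennreal (g (x - x0 - s))" .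
  qed
  also have "\<dots> = ennreal (conv_fn \<mu> g (x - x0))"
    unfolding conv_fn_def using g
    by (intro nn_integral_eq_integral mu.unit_antimono_integrable) (auto simp: unit_antimono_def)
  finally show ?thesis
    using mu.unit_antimono_integral_bounds(1)[OF g]
    by (simp add: emeasure_eq_measure conv_fn_def \<mu>_def)
qed

text \<open>Convolution tail bounds propagate through \<open>thin_tail\<close> because \<open>conv_fn \<mu>\<close> commutes with
  \<open>thin_conv F B\<close> (Fubini) and \<open>conv_fn \<mu> dirac_tail\<close> is the tail function of \<open>\<mu>\<close>.\<close>
lemma (in prob_space) indep_add_tail_le:
  assumes F: "nonneg_distribution F" and ind: "indep_var borel S borel X" and B: "0 \<le> B" "B \<le> 1"
    and hS: "\<And>z. prob {\<omega>\<in>space M. z < S \<omega>} \<le> thin_tail F B n (z - s0)"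
    and hX: "\<And>t. prob {\<omega>\<in>space M. t < X \<omega>} \<le> thin_tail F B k (t - x0)"
  shows "prob {\<omega>\<in>space M. x < S \<omega> + X \<omega>} \<le> thin_tail F B (n + k) (x - s0 - x0)"
proof -
  interpret F: nonneg_distribution F by fact
  have [measurable]: "S \<in> borel_measurable M" using indep_var_rv1[OF ind] by simp
  define \<mu> where "\<mu> = distr M borel S"
  have mu: "real_distribution \<mu>" unfolding \<mu>_def by (rule real_distribution_distr) simp
  interpret mu: real_distribution \<mu> by (rule mu)
  have dirac: "unit_antimono dirac_tail"
    by (rule nonneg_tail_fn_unit_antimono[OF F.nonneg_tail_fn_dirac_tail])
  have tail_S: "conv_fn \<mu> dirac_tail z \<le> thin_tail F B n (z - s0)" for z
  proof -
    have "conv_fn \<mu> dirac_tail z = (\<integral>s. indicator {z<..} s \<partial>\<mu>)"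
      unfolding conv_fn_def
      by (intro Bochner_Integration.integral_cong) (auto simp: dirac_tail_def indicator_def)
    also have "\<dots> = measure \<mu> {z<..}"
      by (simp add: mu.emeasure_finite)
    also have "\<dots> = prob {\<omega>\<in>space M. z < S \<omega>}"
      unfolding \<mu>_def by (subst measure_distr) (auto intro!: arg_cong[where f=prob])
    finally show ?thesis using hS[of z] by simp
  qed
  have "prob {\<omega>\<in>space M. x < S \<omega> + X \<omega>} \<le> conv_fn \<mu> (thin_tail F B k) (x - x0)"
    unfolding \<mu>_def using ind hX F.nonneg_tail_fn_thin_tail[OF B]
    by (intro indep_add_tail_le_conv_fn nonneg_tail_fn_unit_antimono)
  also have "conv_fn \<mu> (thin_tail F B k) = (thin_conv F B ^^ k) (conv_fn \<mu> dirac_tail)"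
    unfolding thin_tail_def by (rule F.conv_fn_thin_conv_pow[OF mu dirac B])
  also have "(thin_conv F B ^^ k) (conv_fn \<mu> dirac_tail) (x - x0)
      \<le> (thin_conv F B ^^ k) (\<lambda>z. thin_tail F B n (z - s0)) (x - x0)"
    using B tail_S
    by (intro F.thin_conv_pow_mono F.unit_antimono_conv_fn[OF mu dirac]
        F.unit_antimono_shift[OF nonneg_tail_fn_unit_antimono[OF F.nonneg_tail_fn_thin_tail[OF B]]]) auto
  also have "\<dots> = thin_tail F B (n + k) (x - s0 - x0)"
    by (simp add: F.thin_conv_pow_shift thin_tail_def funpow_add add.commute algebra_simps)
  finally show ?thesis .
qed

lemma (in prob_space) indep_sum_tail_le:
  assumes F: "nonneg_distribution F" and B: "0 \<le> B" "B \<le> 1"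
    and ind: "indep_vars (\<lambda>_. borel) X I" and sub: "{lo..n} \<subseteq> I"
    and tails: "\<And>i t. i \<in> {lo..n} \<Longrightarrow> prob {\<omega>\<in>space M. t < X i \<omega>} \<le> thin_tail F B k (t - x0)"
  shows "lo + m \<le> n \<Longrightarrow> prob {\<omega>\<in>space M. x < (\<Sum>i\<in>{lo..lo+m}. X i \<omega>)}
      \<le> thin_tail F B (k * (m + 1)) (x - (m + 1) * x0)"
proof (induction m arbitrary: x)
  case 0
  then show ?case using tails[of lo x] by simp
next
  case (Suc m)
  define i where "i = lo + Suc m"
  have ii: "i \<notin> {lo..lo+m}" unfolding i_def by simp
  have ins: "insert i {lo..lo+m} \<subseteq> I" using sub Suc.prems unfolding i_def by auto
  have ind2: "indep_var borel (X i) borel (\<lambda>\<omega>. \<Sum>j\<in>{lo..lo+m}. X j \<omega>)"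
    by (rule indep_vars_sum[OF _ ii indep_vars_subset[OF ind ins]]) simp
  have eqs: "{lo..lo + Suc m} = insert i {lo..lo+m}" unfolding i_def by auto
  have "prob {\<omega>\<in>space M. x < X i \<omega> + (\<Sum>j\<in>{lo..lo+m}. X j \<omega>)}
      \<le> thin_tail F B (k + k * (m + 1)) (x - x0 - (m + 1) * x0)"
  proof (rule indep_add_tail_le[OF F ind2 B])
    show "prob {\<omega>\<in>space M. z < X i \<omega>} \<le> thin_tail F B k (z - x0)" for z
      using tails[of i z] Suc.prems unfolding i_def by auto
    show "prob {\<omega>\<in>space M. t < (\<Sum>j\<in>{lo..lo+m}. X j \<omega>)}
        \<le> thin_tail F B (k * (m + 1)) (t - (m + 1) * x0)" for t
      using Suc.IH[of t] Suc.prems by (simp add: ac_simps)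
  qed
  moreover have "(\<Sum>j\<in>{lo..lo + Suc m}. X j \<omega>) = X i \<omega> + (\<Sum>j\<in>{lo..lo+m}. X j \<omega>)" for \<omega>
    unfolding eqs using ii by simp
  ultimately show ?case by (simp add: algebra_simps)
qed

section \<open>Kesten's bound for subexponential distributions\<close>

locale subexp_distribution = nonneg_distribution +
  assumes pos: "\<And>x. 0 \<le> x \<Longrightarrow> 0 < measure F {x<..}"
    and equiv: "(\<lambda>x. measure (F \<star> F) {x<..}) \<sim>[at_top] (\<lambda>x. 2 * measure F {x<..})"
begin

lemma tail_pos: "0 < tail F x"
  using pos[of x] tail_neg[of x] by (cases "x < 0") (auto simp: tail_def)

lemma eventually_convolution_tail_le:
  assumes "0 < e"
  shows "eventually (\<lambda>x. (\<integral>y. tail F (x - y) \<partial>F) \<le> (2 + e) * tail F x) at_top"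
proof -
  have "eventually (\<lambda>x. norm (measure (F \<star> F) {x<..}) \<le> (1 + e/2) * norm (2 * measure F {x<..})) at_top"
    by (rule asymp_equiv_imp_eventually_le[OF equiv]) (use assms in auto)
  then show ?thesis
  proof (rule eventually_mono)
    fix x assume "norm (measure (F \<star> F) {x<..}) \<le> (1 + e / 2) * norm (2 * measure F {x<..})"
    then show "(\<integral>y. tail F (x - y) \<partial>F) \<le> (2 + e) * tail F x"
      using tail_nonneg[of x] by (simp add: convolution_tail[symmetric] tail_def[symmetric] algebra_simps)
  qed
qed

lemma convolution_tail_le_from:
  assumes "0 < e"
  obtains x1 where "0 \<le> x1" "\<And>x. x1 \<le> x \<Longrightarrow> (\<integral>y. tail F (x - y) \<partial>F) \<le> (2 + e) * tail F x"
proof -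
  from eventually_convolution_tail_le[OF assms] obtain x1 where "\<And>x. x1 \<le> x
      \<Longrightarrow> (\<integral>y. tail F (x - y) \<partial>F) \<le> (2 + e) * tail F x"
    unfolding eventually_at_top_linorder by blast
  then show ?thesis by (intro that[of "max 0 x1"]) auto
qed

lemma integral_nonneg_tail_fn_le:
  assumes g: "nonneg_tail_fn g" and a: "0 \<le> a" and gb: "\<And>t. 0 \<le> t \<Longrightarrow> g t \<le> a * tail F t"
  shows "(\<integral>y. g (x - y) \<partial>F) \<le> a * ((\<integral>y. tail F (x - y) \<partial>F) - tail F x) + tail F x"
proof -
  have pw: "g t \<le> a * (tail F t - dirac_tail t) + dirac_tail t" for t
    using gb[of t] g tail_neg[of t]
    by (cases "t < 0") (auto simp: dirac_tail_def nonneg_tail_fn_def unit_antimono_def)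
  have ic: "integrable F (\<lambda>y. dirac_tail (x - y))"
    by (intro nonneg_tail_fn_integrable nonneg_tail_fn_dirac_tail)
  have iF: "integrable F (\<lambda>y. tail F (x - y))" by (intro nonneg_tail_fn_integrable nonneg_tail_fn_tail)
  have "(\<integral>y. g (x - y) \<partial>F) \<le> (\<integral>y. a * (tail F (x - y) - dirac_tail (x - y)) + dirac_tail (x - y) \<partial>F)"
    by (intro integral_mono[OF nonneg_tail_fn_integrable[OF g]] pw) (use ic iF in auto)
  also have "\<dots> = a * ((\<integral>y. tail F (x - y) \<partial>F) - (\<integral>y. dirac_tail (x - y) \<partial>F)) + (\<integral>y. dirac_tail (x - y) \<partial>F)"
    using ic iF by simp
  finally show ?thesis by (simp add: integral_dirac_tail_shift)
qed

lemma thin_tail_le_mult: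
  assumes "0 \<le> B" "B \<le> 1" "0 \<le> x"
  shows "thin_tail F B n x \<le> n * B"
  using assms(3)
proof (induction n arbitrary: x)
  case 0 then show ?case by (simp add: thin_tail_def dirac_tail_def)
next
  case (Suc n)
  have "thin_tail F B (Suc n) x = (1 - B) * thin_tail F B n x + B * (\<integral>y. thin_tail F B n (x - y) \<partial>F)"
    by (simp add: thin_tail_Suc thin_conv_def)
  also have "\<dots> \<le> (1 - B) * (n * B) + B * 1"
    using assms Suc nonneg_tail_fn_integral_bounds(2)[OF nonneg_tail_fn_thin_tail[OF assms(1,2)]]
    by (intro add_mono mult_left_mono) auto
  also have "\<dots> \<le> Suc n * B" using assms by (simp add: algebra_simps)
  finally show ?case .
qed

lemma thin_tail_Suc_le:
  assumes B: "0 \<le> B" "B \<le> 1" and b: "0 \<le> b" and e: "0 \<le> e"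
    and IH: "\<And>t. 0 \<le> t \<Longrightarrow> thin_tail F B n t \<le> b * tail F t"
    and x: "0 \<le> x" and conv: "(\<integral>y. tail F (x - y) \<partial>F) \<le> (2 + e) * tail F x"
  shows "thin_tail F B (Suc n) x \<le> (b * (1 + B * e) + B) * tail F x"
proof -
  have "(\<integral>y. thin_tail F B n (x - y) \<partial>F) \<le> b * ((\<integral>y. tail F (x - y) \<partial>F) - tail F x) + tail F x"
    by (rule integral_nonneg_tail_fn_le[OF nonneg_tail_fn_thin_tail[OF B] b IH])
  also have "\<dots> \<le> b * ((2 + e) * tail F x - tail F x) + tail F x"
    using conv b by (intro add_mono mult_left_mono) auto
  finally have int: "(\<integral>y. thin_tail F B n (x - y) \<partial>F) \<le> (b * (1 + e) + 1) * tail F x"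
    by (simp add: algebra_simps)
  have "thin_tail F B (Suc n) x = (1 - B) * thin_tail F B n x + B * (\<integral>y. thin_tail F B n (x - y) \<partial>F)"
    by (simp add: thin_tail_Suc thin_conv_def)
  also have "\<dots> \<le> (1 - B) * (b * tail F x) + B * ((b * (1 + e) + 1) * tail F x)"
    using B IH[OF x] int by (intro add_mono mult_left_mono) auto
  also have "\<dots> = (b * (1 + B * e) + B) * tail F x" by (simp add: algebra_simps)
  finally show ?thesis .
qed

lemma Kesten_bound:
  assumes B: "0 \<le> B" "B \<le> 1" and e: "0 < e"
    and x1: "0 \<le> x1" "\<And>x. x1 \<le> x \<Longrightarrow> (\<integral>y. tail F (x - y) \<partial>F) \<le> (2 + e) * tail F x"
  shows "0 \<le> x \<Longrightarrow> thin_tail F B n x \<le> (1 / tail F x1) * B * n * (1 + e) ^ n * tail F x"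
proof (induction n arbitrary: x)
  case 0 then show ?case by (simp add: thin_tail_def dirac_tail_def)
next
  case (Suc n)
  define K where "K = 1 / tail F x1"
  have K1: "1 \<le> K" unfolding K_def using tail_pos[of x1] tail_le_1[of x1] by simp
  have Ke: "1 \<le> K * (1 + e) ^ Suc n"
    using mult_mono[OF K1 one_le_power[of "1 + e" "Suc n"]] K1 e by simp
  define b where "b = K * B * n * (1 + e) ^ n"
  have b0: "0 \<le> b" unfolding b_def using K1 B e by simp
  show ?case
  proof (cases "x < x1")
    case True
    have "thin_tail F B (Suc n) x \<le> Suc n * B * (tail F x1 * K)"
      using thin_tail_le_mult[OF B Suc.prems, of "Suc n"] tail_pos[of x1] unfolding K_def by simp
    also have "\<dots> \<le> Suc n * B * (tail F x * K)"
      using tail_antimono[of x x1] True B K1 by (intro mult_left_mono mult_right_mono) auto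
    also have "\<dots> \<le> Suc n * B * (tail F x * K) * (1 + e) ^ Suc n"
    proof -
      have "0 \<le> Suc n * B * (tail F x * K)" using B K1 tail_nonneg[of x] by simp
      then show ?thesis using e one_le_power[of "1 + e" "Suc n"] by (simp add: mult_le_cancel_left1)
    qed
    finally show ?thesis unfolding K_def by (simp add: mult_ac)
  next
    case False
    have "thin_tail F B (Suc n) x \<le> (b * (1 + B * e) + B) * tail F x"
      using Suc.IH Suc.prems x1(2)[of x] False B b0 e
      by (intro thin_tail_Suc_le) (auto simp: b_def K_def)
    also have "\<dots> \<le> (K * B * Suc n * (1 + e) ^ Suc n) * tail F x"
    proof (intro mult_right_mono tail_nonneg)
      have "b * (1 + B * e) \<le> b * (1 + e)"
        using B e b0 by (intro mult_left_mono) (auto simp: mult_le_cancel_right1)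
      also have "\<dots> = K * B * n * (1 + e) ^ Suc n" unfolding b_def by simp
      finally have "b * (1 + B * e) \<le> K * B * n * (1 + e) ^ Suc n" .
      moreover have "B \<le> K * B * (1 + e) ^ Suc n"
        using mult_left_mono[OF Ke B(1)] by (simp add: mult_ac)
      ultimately show "b * (1 + B * e) + B \<le> K * B * Suc n * (1 + e) ^ Suc n"
        by (simp add: algebra_simps)
    qed
    finally show ?thesis unfolding K_def by (simp add: algebra_simps)
  qed
qed

lemma thin_tail_1_Suc_lower:
  assumes "0 \<le> s"
  shows "tail F s + (1 - tail F s) * thin_tail F 1 n s \<le> thin_tail F 1 (Suc n) s"
proof -
  have g: "nonneg_tail_fn (thin_tail F 1 n)" by (rule nonneg_tail_fn_thin_tail) auto
  have ic: "integrable F (\<lambda>y. dirac_tail (s - y))"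
    by (intro nonneg_tail_fn_integrable nonneg_tail_fn_dirac_tail)
  have "(\<integral>y. dirac_tail (s - y) + (1 - dirac_tail (s - y)) * thin_tail F 1 n s \<partial>F)
      \<le> (\<integral>y. thin_tail F 1 n (s - y) \<partial>F)"
  proof (rule integral_mono_AE)
    show "integrable F (\<lambda>y. dirac_tail (s - y) + (1 - dirac_tail (s - y)) * thin_tail F 1 n s)" using ic
      by simp
    show "integrable F (\<lambda>y. thin_tail F 1 n (s - y))" by (rule nonneg_tail_fn_integrable[OF g])
    show "AE y in F. dirac_tail (s - y) + (1 - dirac_tail (s - y)) * thin_tail F 1 n s
        \<le> thin_tail F 1 n (s - y)"
      using AE_nonneg
    proof eventually_elim
      case (elim y)
      show ?case
      proof (cases "s - y < 0")
        case True then show ?thesis using g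
          by (simp add: dirac_tail_def nonneg_tail_fn_def unit_antimono_def)
      next
        case False then show ?thesis using g elim
          unfolding nonneg_tail_fn_def unit_antimono_def antimono_def by (simp add: dirac_tail_def)
      qed
    qed
  qed
  also have "\<dots> = thin_tail F 1 (Suc n) s" by (simp add: thin_tail_Suc thin_conv_def)
  finally show ?thesis using ic by (simp add: integral_dirac_tail_shift)
qed

lemma thin_tail_1_lower:
  assumes "0 \<le> s"
  shows "n * tail F s * (1 - tail F s) ^ (n - 1) \<le> thin_tail F 1 n s"
proof (induction n)
  case 0 then show ?case by (simp add: thin_tail_def dirac_tail_def)
next
  case (Suc n)
  define f where "f = tail F s"
  have f: "0 \<le> f" "f \<le> 1" unfolding f_def using tail_nonneg tail_le_1 by auto
  have "Suc n * f * (1 - f) ^ n \<le> f + (1 - f) * (n * f * (1 - f) ^ (n - 1))"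
  proof (cases n)
    case 0 then show ?thesis by simp
  next
    case (Suc m)
    have "f * (1 - f) ^ n \<le> f" using f by (simp add: mult_left_le power_le_one)
    moreover have "(1 - f) * (n * f * (1 - f) ^ (n - 1)) = n * f * (1 - f) ^ n"
      using Suc by (simp add: algebra_simps)
    ultimately show ?thesis by (simp add: algebra_simps)
  qed
  also have "\<dots> \<le> f + (1 - f) * thin_tail F 1 n s"
    using Suc f by (intro add_left_mono mult_left_mono) (auto simp: f_def)
  also have "\<dots> \<le> thin_tail F 1 (Suc n) s" unfolding f_def by (rule thin_tail_1_Suc_lower[OF assms])
  finally show ?case unfolding f_def by simp
qed

lemma thin_tail_1_lower_half:
  assumes "0 \<le> s" "k * tail F s \<le> 1/2"
  shows "k * tail F s / 2 \<le> thin_tail F 1 k s"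
proof -
  define f where "f = tail F s"
  have f: "0 \<le> f" "f \<le> 1" unfolding f_def using tail_nonneg tail_le_1 by auto
  have "1 + real (k - 1) * (- f) \<le> (1 + (- f)) ^ (k - 1)"
    by (rule Bernoulli_inequality) (use f in auto)
  moreover have "real (k - 1) * f \<le> 1/2"
  proof -
    have "real (k - 1) * f \<le> k * f" using f by (intro mult_right_mono) auto
    then show ?thesis using assms(2) unfolding f_def by simp
  qed
  ultimately have "1/2 \<le> (1 - f) ^ (k - 1)" by simp
  then have "k * f / 2 \<le> k * f * (1 - f) ^ (k - 1)"
    using f by (simp add: mult_left_mono[of "1/2" _ "k * f", simplified])
  also have "\<dots> \<le> thin_tail F 1 k s" unfolding f_def by (rule thin_tail_1_lower[OF assms(1)])
  finally show ?thesis unfolding f_def .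
qed

lemma eventually_tail_shift_le:
  assumes t: "0 \<le> t" and e: "0 < e"
  shows "eventually (\<lambda>x. tail F (x - t) \<le> (1 + e) * tail F x) at_top"
proof -
  define d where "d = e / (2 + e)"
  have d: "0 < d" "d < 1" using e unfolding d_def by (auto simp: field_simps)
  have d1: "1 + d = (1 + e) * (1 - d)" unfolding d_def using e by (simp add: field_simps)
  have ft: "0 < tail F t" by (rule tail_pos)
  have ev1: "eventually (\<lambda>x. (\<integral>y. tail F (x - y) \<partial>F) \<le> (2 + d * tail F t) * tail F x) at_top"
    by (rule eventually_convolution_tail_le) (use d ft in auto)
  have ev2: "eventually (\<lambda>x. tail F x < d * tail F t) at_top"
    using order_tendstoD(2)[OF tail_tendsto_0, of "d * tail F t"] d ft by simp
  show ?thesis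
    using ev1 ev2 eventually_ge_at_top[of t]
  proof eventually_elim
    case (elim x)
    have "tail F (x - t) * (tail F t - tail F x) \<le> (1 + d) * tail F t * tail F x"
      using convolution_tail_lower[OF elim(3)] elim(1) by (simp add: algebra_simps)
    moreover have "tail F (x - t) * ((1 - d) * tail F t) \<le> tail F (x - t) * (tail F t - tail F x)"
      using elim(2) tail_nonneg[of "x - t"] by (intro mult_left_mono) (auto simp: algebra_simps)
    ultimately have "tail F (x - t) * (1 - d) * tail F t \<le> ((1 + e) * tail F x) * (1 - d) * tail F t"
      by (simp add: d1 algebra_simps)
    then show ?case using d ft by simp
  qed
qed

lemma tail_shift_mult_le:
  assumes t: "0 \<le> t" and e: "0 \<le> e" and x2: "\<And>x. x2 \<le> x \<Longrightarrow> tail F (x - t) \<le> (1 + e) * tail F x"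
  shows "tail F (x - n * t) \<le> (1 / tail F x2) * (1 + e) ^ n * tail F x"
proof (induction n arbitrary: x)
  case 0
  have "1 \<le> 1 / tail F x2" using tail_pos[of x2] tail_le_1[of x2] by simp
  then show ?case using tail_pos[of x2] tail_le_1[of x2] tail_nonneg[of x]
    by (simp add: le_divide_eq mult_left_le)
next
  case (Suc n)
  have eq: "x - Suc n * t = (x - t) - n * t" by (simp add: algebra_simps)
  show ?case
  proof (cases "x2 \<le> x")
    case True
    have "tail F (x - Suc n * t) \<le> (1 / tail F x2) * (1 + e) ^ n * tail F (x - t)"
      unfolding eq by (rule Suc.IH)
    also have "\<dots> \<le> (1 / tail F x2) * (1 + e) ^ n * ((1 + e) * tail F x)"
      using x2[OF True] e tail_pos[of x2] by (intro mult_left_mono) auto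
    finally show ?thesis by (simp add: mult_ac)
  next
    case False
    have "tail F (x - Suc n * t) \<le> 1" by (rule tail_le_1)
    also have "\<dots> = (1 / tail F x2) * tail F x2" using tail_pos[of x2] by simp
    also have "\<dots> \<le> (1 / tail F x2) * tail F x" using False tail_antimono[of x x2] tail_pos[of x2] by simp
    also have "\<dots> \<le> (1 / tail F x2) * (1 + e) ^ Suc n * tail F x"
    proof -
      have "1 \<le> (1 + e) ^ Suc n" using e by (intro one_le_power) auto
      moreover have "0 \<le> (1 / tail F x2) * tail F x" using tail_pos[of x2] tail_nonneg[of x] by simp
      ultimately have "((1 / tail F x2) * tail F x) * 1 \<le> ((1 / tail F x2) * tail F x) * (1 + e) ^ Suc n"
        by (intro mult_left_mono) auto
      then show ?thesis by (simp add: mult_ac)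
    qed
    finally show ?thesis .
  qed
qed

lemma tail_le_thin_tail_shift:
  assumes fin: "finite_measure \<nu>" and sets: "sets \<nu> = sets borel" and mm: "0 < mmin"
    and mass: "measure \<nu> UNIV = 0 \<or> mmin \<le> measure \<nu> UNIV"
    and tl: "\<And>t. x1 \<le> t \<Longrightarrow> measure \<nu> {t<..} \<le> b * tail F t" and b: "0 \<le> b"
    and x0: "x1 \<le> x0" "0 \<le> x0" and B: "0 \<le> B" "B \<le> 1"
    and ph: "\<And>s. 0 \<le> s \<Longrightarrow> (b / mmin) * tail F (s + x0) \<le> thin_tail F B k s"
  shows "measure \<nu> {t<..} \<le> thin_tail F B k (t - x0) * measure \<nu> UNIV"
proof -
  interpret nu: finite_measure \<nu> by (rule fin)
  have le: "measure \<nu> {t<..} \<le> measure \<nu> UNIV"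
  proof (cases "{t<..} \<in> sets \<nu>")
    case True
    have sp: "space \<nu> = UNIV" using sets_eq_imp_space_eq[OF sets] by simp
    show ?thesis using nu.finite_measure_mono[of "{t<..}" "space \<nu>"] sets.top[of \<nu>] sp by simp
  next
    case False then show ?thesis by (simp add: measure_notin_sets)
  qed
  show ?thesis
  proof (cases "measure \<nu> UNIV = 0")
    case True then show ?thesis using le by simp
  next
    case False
    with mass have m: "mmin \<le> measure \<nu> UNIV" by simp
    show ?thesis
    proof (cases "t < x0")
      case True then show ?thesis using le thin_tail_neg[OF B, of "t - x0" k] by simp
    next
      case False
      have "measure \<nu> {t<..} \<le> b * tail F t" using tl[of t] False x0 by simp
      also have "\<dots> = mmin * ((b / mmin) * tail F ((t - x0) + x0))" using mm by simp
      also have "\<dots> \<le> mmin * thin_tail F B k (t - x0)" using ph[of "t - x0"] False mm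
        by (intro mult_left_mono) auto
      also have "\<dots> \<le> measure \<nu> UNIV * thin_tail F B k (t - x0)"
        using m thin_tail_nonneg[OF B] by (intro mult_right_mono) auto
      finally show ?thesis by (simp add: mult.commute)
    qed
  qed
qed

lemma tail_shift_le_thin_tail_1:
  assumes B: "0 \<le> B" "B \<le> 1" and x0: "0 \<le> x0" and s: "0 \<le> s"
  shows "B * tail F (s + x0) \<le> thin_tail F B 1 s"
proof -
  have "thin_tail F B 1 s = (1 - B) * dirac_tail s + B * tail F s"
    by (simp add: thin_tail_def thin_conv_def integral_dirac_tail_shift)
  also have "\<dots> = B * tail F s" using s by (simp add: dirac_tail_def)
  finally show ?thesis using tail_antimono[of s "s + x0"] x0 B by (simp add: mult_left_mono)
qed

lemma exists_thin_tail_dominating: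
  assumes b: "0 \<le> b'"
  obtains k s0 where "1 \<le> k" "0 \<le> s0" "\<And>x0 s. s0 \<le> x0 \<Longrightarrow> 0 \<le> s \<Longrightarrow> b' * tail F (s + x0) \<le> thin_tail F 1 k s"
proof -
  define k where "k = nat \<lceil>2 * b'\<rceil> + 1"
  have k1: "1 \<le> k" unfolding k_def by simp
  have kb: "2 * b' \<le> real k" unfolding k_def by linarith
  have "eventually (\<lambda>x. tail F x < 1 / (2 * real k)) at_top"
    using order_tendstoD(2)[OF tail_tendsto_0, of "1 / (2 * real k)"] k1 by simp
  then obtain s1 where s1: "\<And>x. s1 \<le> x \<Longrightarrow> tail F x < 1 / (2 * real k)" unfolding eventually_at_top_linorder
    by auto
  define s0 where "s0 = max s1 0"
  have s0: "0 \<le> s0" "k * tail F s0 \<le> 1/2"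
  proof -
    show "0 \<le> s0" unfolding s0_def by simp
    have "tail F s0 < 1 / (2 * real k)" using s1[of s0] unfolding s0_def by simp
    then show "k * tail F s0 \<le> 1/2" using k1 by (simp add: field_simps)
  qed
  show ?thesis
  proof (rule that[OF k1 s0(1)])
    fix x0 s :: real assume x0: "s0 \<le> x0" and s: "0 \<le> s"
    show "b' * tail F (s + x0) \<le> thin_tail F 1 k s"
    proof (cases "s0 \<le> s")
      case True
      have "k * tail F s \<le> k * tail F s0" using tail_antimono[OF True] by (intro mult_left_mono) auto
      then have kf: "k * tail F s \<le> 1/2" using s0(2) by linarith
      have "b' * tail F (s + x0) \<le> b' * tail F s"
        using tail_antimono[of s "s + x0"] x0 s0 b by (intro mult_left_mono) auto
      also have "\<dots> \<le> k * tail F s / 2" using mult_right_mono[OF kb tail_nonneg[of s]] by (simp add: mult_ac)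
      also have "\<dots> \<le> thin_tail F 1 k s" by (rule thin_tail_1_lower_half[OF s kf])
      finally show ?thesis .
    next
      case False
      have "b' * tail F (s + x0) \<le> b' * tail F s0"
        using tail_antimono[of s0 "s + x0"] x0 s b by (intro mult_left_mono) auto
      also have "\<dots> \<le> k * tail F s0 / 2" using mult_right_mono[OF kb tail_nonneg[of s0]]
        by (simp add: mult_ac)
      also have "\<dots> \<le> thin_tail F 1 k s0" by (rule thin_tail_1_lower_half[OF s0(1) s0(2)])
      also have "\<dots> \<le> thin_tail F 1 k s" using False by (intro thin_tail_antimono) auto
      finally show ?thesis .
    qed
  qed
qed

lemma thin_tail_le_exp:
  assumes B: "0 \<le> B" "B \<le> 1" and e: "0 < e"
    and x1: "0 \<le> x1" "\<And>x. x1 \<le> x \<Longrightarrow> (\<integral>y. tail F (x - y) \<partial>F) \<le> (2 + e) * tail F x"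
  shows "thin_tail F B n y \<le> (1 + (1 / tail F x1) / e) * (1 + e) ^ (2 * n) * tail F y"
proof -
  define K where "K = 1 / tail F x1"
  have K: "0 \<le> K" unfolding K_def using tail_pos[of x1] by simp
  have p1: "1 \<le> (1 + e) ^ (2 * n)" using e by (intro one_le_power) auto
  have c0: "1 \<le> (1 + K / e) * (1 + e) ^ (2 * n)"
  proof -
    have "1 * 1 \<le> (1 + K / e) * (1 + e) ^ (2 * n)" by (rule mult_mono) (use p1 K e in auto)
    then show ?thesis by simp
  qed
  have "thin_tail F B n y \<le> (1 + K / e) * (1 + e) ^ (2 * n) * tail F y"
  proof (cases "y < 0")
    case True
    then show ?thesis using thin_tail_le_1[OF B, of n y] tail_neg[OF True] c0 by simp
  next
    case False
    have "thin_tail F B n y \<le> K * B * n * (1 + e) ^ n * tail F y" unfolding K_def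
      by (rule Kesten_bound[OF B e x1]) (use False in auto)
    also have "\<dots> \<le> K * 1 * ((1 + e) ^ n / e) * (1 + e) ^ n * tail F y"
    proof -
      have "1 + real n * e \<le> (1 + e) ^ n" using Bernoulli_inequality[of e n] e by simp
      then have "real n \<le> (1 + e) ^ n / e" using e by (simp add: field_simps)
      then show ?thesis using K B e tail_nonneg[of y]
        by (intro mult_right_mono mult_mono) auto
    qed
    also have "\<dots> = (K / e) * (1 + e) ^ (2 * n) * tail F y"
      by (simp add: power_mult power2_eq_square power_add[symmetric] mult_2)
    also have "\<dots> \<le> (1 + K / e) * (1 + e) ^ (2 * n) * tail F y"
      using tail_nonneg[of y] p1 by (intro mult_right_mono) auto
    finally show ?thesis .
  qed
  then show ?thesis by (simp add: K_def)
qed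

lemma eventually_le_of_Limsup:
  assumes lim: "Limsup at_top (\<lambda>x. ereal (f x / measure F {x<..})) \<le> ereal a" and \<delta>: "0 < \<delta>"
  shows "eventually (\<lambda>x. f x \<le> (a + \<delta>) * tail F x) at_top"
proof -
  have "Limsup at_top (\<lambda>x. ereal (f x / measure F {x<..})) < ereal (a + \<delta>)"
    using lim \<delta> by (simp add: le_less_trans)
  then have "eventually (\<lambda>x. ereal (f x / measure F {x<..}) < ereal (a + \<delta>)) at_top"
    by (rule Limsup_lessD)
  then show ?thesis
    by (rule eventually_mono) (use tail_pos in \<open>auto simp: tail_def divide_less_eq\<close>)
qed

lemma Limsup_le_of_eventually:
  assumes "eventually (\<lambda>x. f x \<le> a * tail F x) at_top"
  shows "Limsup at_top (\<lambda>x. ereal (f x / measure F {x<..})) \<le> ereal a"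
  by (rule Limsup_bounded, rule eventually_mono[OF assms])
    (use tail_pos in \<open>auto simp: tail_def divide_le_eq\<close>)

lemma thin_tail_shifted_le:
  fixes x x0 :: real
  assumes e: "0 < e" and x1: "0 \<le> x1" "\<And>x. x1 \<le> x \<Longrightarrow> (\<integral>y. tail F (x - y) \<partial>F) \<le> (2 + e) * tail F x"
    and B: "0 \<le> B" "B \<le> 1" and x0: "0 \<le> x0" and l: "l < L" and x: "L * x0 \<le> x"
  shows "thin_tail F B (Suc l) (x - Suc l * x0) \<le> (1 / tail F x1) * B * L * (1 + e) ^ L
      * tail F (x - L * x0)"
proof -
  have lx: "real (Suc l) * x0 \<le> L * x0" using l x0 by (intro mult_right_mono) auto
  then have y0: "0 \<le> x - Suc l * x0" using x by simp
  have K: "0 \<le> 1 / tail F x1" using tail_pos[of x1] by simp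
  have "thin_tail F B (Suc l) (x - Suc l * x0) \<le> (1 / tail F x1) * B * Suc l * (1 + e) ^ Suc l
      * tail F (x - Suc l * x0)"
    by (rule Kesten_bound[OF B e x1 y0])
  also have "\<dots> \<le> (1 / tail F x1) * B * L * (1 + e) ^ L * tail F (x - L * x0)"
    using l lx K B e tail_nonneg
    by (intro mult_mono power_increasing tail_antimono mult_right_mono) auto
  finally show ?thesis .
qed

end

section \<open>Taboo probabilities of a finite Markov chain\<close>

text \<open>\<open>taboo_vec d P v C n j\<close> is the mass, under initial vector \<open>v\<close> and transition matrix
  \<open>P\<close>, of the paths \<open>j\<^sub>0 \<dots> j\<^sub>n\<close> ending in \<open>j\<^sub>n = j\<close> that satisfy \<open>j\<^sub>k \<in> C k\<close> for all \<open>k \<le> n\<close>.\<close>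
fun taboo_vec :: "nat \<Rightarrow> (nat \<Rightarrow> nat \<Rightarrow> real) \<Rightarrow> (nat \<Rightarrow> real) \<Rightarrow> (nat \<Rightarrow> nat set) \<Rightarrow> nat \<Rightarrow> nat \<Rightarrow> real" where
  "taboo_vec d P v C 0 j = (if j \<in> C 0 then v j else 0)"
| "taboo_vec d P v C (Suc n) j = (if j \<in> C (Suc n) then (\<Sum>i<d. taboo_vec d P v C n i * P i j) else 0)"

definition nonzero :: "nat set" where "nonzero = {j. j \<noteq> 0}"
definition avoid_zero :: "nat \<Rightarrow> nat set" where "avoid_zero k = (if k = 0 then UNIV else nonzero)"

locale irreducible_stochastic =
  fixes d :: nat and P :: "nat \<Rightarrow> nat \<Rightarrow> real"
  assumes d1: "1 \<le> d" and st: "stochastic_mat d P" and irr: "irreducible_mat d P"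
begin

lemma P_nonneg: "i < d \<Longrightarrow> j < d \<Longrightarrow> 0 \<le> P i j" using st by (simp add: stochastic_mat_def)
lemma P_sum: "i < d \<Longrightarrow> (\<Sum>j<d. P i j) = 1" using st by (simp add: stochastic_mat_def)

lemma taboo_vec_nonneg: "(\<And>i. i < d \<Longrightarrow> 0 \<le> v i) \<Longrightarrow> j < d \<Longrightarrow> 0 \<le> taboo_vec d P v C n j"
  by (induction n arbitrary: j) (auto intro!: sum_nonneg mult_nonneg_nonneg P_nonneg)

lemma sum_taboo_vec_Suc_le:
  assumes v: "\<And>i. i < d \<Longrightarrow> 0 \<le> v i"
  shows "(\<Sum>j<d. taboo_vec d P v C (Suc n) j) \<le> (\<Sum>j<d. taboo_vec d P v C n j)"
proof -
  have "(\<Sum>j<d. taboo_vec d P v C (Suc n) j) \<le> (\<Sum>j<d. \<Sum>i<d. taboo_vec d P v C n i * P i j)"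
    by (intro sum_mono) (auto intro!: sum_nonneg mult_nonneg_nonneg P_nonneg taboo_vec_nonneg v)
  also have "\<dots> = (\<Sum>i<d. taboo_vec d P v C n i * (\<Sum>j<d. P i j))"
    by (subst sum.swap) (simp add: sum_distrib_left)
  also have "\<dots> = (\<Sum>i<d. taboo_vec d P v C n i)" by (simp add: P_sum)
  finally show ?thesis .
qed

lemma sum_taboo_vec_antimono:
  assumes v: "\<And>i. i < d \<Longrightarrow> 0 \<le> v i" and "m \<le> n"
  shows "(\<Sum>j<d. taboo_vec d P v C n j) \<le> (\<Sum>j<d. taboo_vec d P v C m j)"
  using assms(2)
proof (induction n)
  case 0 then show ?case by simp
next
  case (Suc n)
  show ?case
  proof (cases "m = Suc n")
    case True then show ?thesis by simp
  next
    case False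
    then have "m \<le> n" using Suc.prems by simp
    have "(\<Sum>j<d. taboo_vec d P v C (Suc n) j) \<le> (\<Sum>j<d. taboo_vec d P v C n j)"
      by (rule sum_taboo_vec_Suc_le) (rule v)
    then show ?thesis using Suc.IH \<open>m \<le> n\<close> by linarith
  qed
qed

lemma sum_taboo_vec_le:
  assumes v: "\<And>i. i < d \<Longrightarrow> 0 \<le> v i"
  shows "(\<Sum>j<d. taboo_vec d P v C n j) \<le> (\<Sum>j<d. v j)"
proof -
  have "(\<Sum>j<d. taboo_vec d P v C n j) \<le> (\<Sum>j<d. taboo_vec d P v C 0 j)"
    by (rule sum_taboo_vec_antimono[OF v]) auto
  also have "\<dots> \<le> (\<Sum>j<d. v j)" by (intro sum_mono) (auto simp: v)
  finally show ?thesis .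
qed

lemma taboo_vec_add:
  "taboo_vec d P v C (a + t) j
      = taboo_vec d P (taboo_vec d P v C a) (\<lambda>k. if k = 0 then UNIV else C (a + k)) t j"
  by (induction t arbitrary: j) auto

lemma taboo_vec_linear: "j < d
    \<Longrightarrow> taboo_vec d P v C n j = (\<Sum>i<d. v i * taboo_vec d P (\<lambda>k. if k = i then 1 else 0) C n j)"
proof (induction n arbitrary: j)
  case 0
  have "(\<Sum>i<d. v i * taboo_vec d P (\<lambda>k. if k = i then 1 else 0) C 0 j)
      = (\<Sum>i<d. if i = j then (if j \<in> C 0 then v j else 0) else 0)"
    by (intro sum.cong) auto
  also have "\<dots> = (if j \<in> C 0 then v j else 0)" using 0 by (subst sum.delta) auto
  finally show ?case by simp
next
  case (Suc n)
  have "taboo_vec d P v C (Suc n) j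
      = (if j \<in> C (Suc n)
         then (\<Sum>l<d. (\<Sum>i<d. v i * taboo_vec d P (\<lambda>k. if k = i then 1 else 0) C n l) * P l j) else 0)"
    using Suc.IH by simp
  also have "\<dots> = (\<Sum>i<d. v i * taboo_vec d P (\<lambda>k. if k = i then 1 else 0) C (Suc n) j)"
    by (auto simp: sum_distrib_right sum_distrib_left mult.assoc intro: sum.swap)
  finally show ?case .
qed

lemma mat_pow_nonneg: "i < d \<Longrightarrow> j < d \<Longrightarrow> 0 \<le> mat_pow d P n i j"
  by (induction n arbitrary: j) (auto intro!: sum_nonneg mult_nonneg_nonneg P_nonneg)

lemma mat_pow_sum: "i < d \<Longrightarrow> (\<Sum>j<d. mat_pow d P n i j) = 1"
proof (induction n)
  case 0 then show ?case by (simp add: sum.delta)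
next
  case (Suc n)
  have "(\<Sum>j<d. mat_pow d P (Suc n) i j) = (\<Sum>k<d. mat_pow d P n i k * (\<Sum>j<d. P k j))"
    by (simp add: sum_distrib_left) (rule sum.swap)
  also have "\<dots> = 1" using Suc by (simp add: P_sum)
  finally show ?case .
qed

lemma taboo_vec_le_mat_pow: "i < d \<Longrightarrow> j < d
    \<Longrightarrow> taboo_vec d P (\<lambda>k. if k = i then 1 else 0) avoid_zero n j \<le> mat_pow d P n i j"
proof (induction n arbitrary: j)
  case 0 then show ?case by (simp add: avoid_zero_def)
next
  case (Suc n)
  show ?case
  proof (cases "j \<in> avoid_zero (Suc n)")
    case True
    then show ?thesis using Suc
      by (auto intro!: sum_mono mult_right_mono P_nonneg)
  next
    case False then show ?thesis using Suc mat_pow_nonneg[of i j "Suc n"] by simp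
  qed
qed

lemma sum_taboo_vec_unit_le:
  assumes i: "i < d" and n: "1 \<le> n"
  shows "(\<Sum>j<d. taboo_vec d P (\<lambda>k. if k = i then 1 else 0) avoid_zero n j) \<le> 1 - mat_pow d P n i 0"
proof -
  obtain m where m: "n = Suc m" using n by (cases n) auto
  have z: "taboo_vec d P (\<lambda>k. if k = i then 1 else 0) avoid_zero n 0 = 0" unfolding m
    by (simp add: avoid_zero_def nonzero_def)
  have "(\<Sum>j<d. taboo_vec d P (\<lambda>k. if k = i then 1 else 0) avoid_zero n j)
      = (\<Sum>j\<in>{..<d}-{0}. taboo_vec d P (\<lambda>k. if k = i then 1 else 0) avoid_zero n j)"
    using d1 z by (subst sum.remove[of _ 0]) auto
  also have "\<dots> \<le> (\<Sum>j\<in>{..<d}-{0}. mat_pow d P n i j)"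
    by (intro sum_mono taboo_vec_le_mat_pow i) auto
  also have "\<dots> = 1 - mat_pow d P n i 0"
    using d1 mat_pow_sum[OF i, of n] by (subst (asm) sum.remove[of _ 0]) auto
  finally show ?thesis .
qed

lemma avoid_zero_contraction:
  obtains N \<eta> where "1 \<le> N" "0 < \<eta>" "\<eta> \<le> 1"
    "\<And>i. i < d \<Longrightarrow> i \<noteq> 0 \<Longrightarrow> (\<Sum>j<d. taboo_vec d P (\<lambda>k. if k = i then 1 else 0) avoid_zero N j) \<le> 1 - \<eta>"
proof -
  have "\<forall>i\<in>{1..<d}. \<exists>n. 0 < mat_pow d P n i 0"
    using irr d1 unfolding irreducible_mat_def by auto
  then obtain nn where nn: "\<And>i. i \<in> {1..<d} \<Longrightarrow> 0 < mat_pow d P (nn i) i 0" by metis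
  have nn1: "1 \<le> nn i" if "i \<in> {1..<d}" for i
    using nn[OF that] that by (cases "nn i") auto
  define N where "N = Max (insert 1 (nn ` {1..<d}))"
  define \<eta> where "\<eta> = Min (insert 1 ((\<lambda>i. mat_pow d P (nn i) i 0) ` {1..<d}))"
  have N1: "1 \<le> N" unfolding N_def by simp
  have eta: "0 < \<eta>" unfolding \<eta>_def using nn by (subst Min_gr_iff) auto
  have eta1: "\<eta> \<le> 1" unfolding \<eta>_def by (intro Min_le) auto
  show ?thesis
  proof (rule that[OF N1 eta eta1])
    fix i assume i: "i < d" "i \<noteq> 0"
    then have ii: "i \<in> {1..<d}" by auto
    have "nn i \<le> N" unfolding N_def using ii by (intro Max_ge) auto
    have "(\<Sum>j<d. taboo_vec d P (\<lambda>k. if k = i then 1 else 0) avoid_zero N j)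
        \<le> (\<Sum>j<d. taboo_vec d P (\<lambda>k. if k = i then 1 else 0) avoid_zero (nn i) j)"
      by (rule sum_taboo_vec_antimono) (auto simp: \<open>nn i \<le> N\<close>)
    also have "\<dots> \<le> 1 - mat_pow d P (nn i) i 0" by (rule sum_taboo_vec_unit_le[OF i(1) nn1[OF ii]])
    also have "\<dots> \<le> 1 - \<eta>"
    proof -
      have "\<eta> \<le> mat_pow d P (nn i) i 0" unfolding \<eta>_def by (rule Min_le) (use ii in auto)
      then show ?thesis by simp
    qed
    finally show "(\<Sum>j<d. taboo_vec d P (\<lambda>k. if k = i then 1 else 0) avoid_zero N j) \<le> 1 - \<eta>" .
  qed
qed

lemma taboo_vec_cong: "(\<And>k. k \<le> n \<Longrightarrow> C k = C' k) \<Longrightarrow> taboo_vec d P v C n j = taboo_vec d P v C' n j"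
  by (induction n arbitrary: j) auto

lemma taboo_vec_restrict: "taboo_vec d P v C n j
    = taboo_vec d P (\<lambda>j. if j \<in> C 0 then v j else 0) (C(0 := UNIV)) n j"
  by (induction n arbitrary: j) auto

lemma taboo_vec_zero: "v 0 = 0 \<Longrightarrow> taboo_vec d P v avoid_zero n 0 = 0"
  by (cases n) (auto simp: avoid_zero_def nonzero_def)

lemma avoid_zero_shift: "(\<lambda>k. if k = 0 then UNIV else avoid_zero (a + k)) = avoid_zero"
  by (auto simp: avoid_zero_def fun_eq_iff)

end

locale zero_recurrent = irreducible_stochastic +
  fixes N :: nat and \<eta> :: real
  assumes N1: "1 \<le> N" and eta: "0 < \<eta>" "\<eta> \<le> 1"
    and contr: "\<And>i. i < d \<Longrightarrow> i \<noteq> 0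
        \<Longrightarrow> (\<Sum>j<d. taboo_vec d P (\<lambda>k. if k = i then 1 else 0) avoid_zero N j) \<le> 1 - \<eta>"
begin

lemma sum_taboo_vec_contract:
  assumes v: "\<And>i. i < d \<Longrightarrow> 0 \<le> v i" and v0: "v 0 = 0"
  shows "(\<Sum>j<d. taboo_vec d P v avoid_zero N j) \<le> (1 - \<eta>) * (\<Sum>j<d. v j)"
proof -
  have "(\<Sum>j<d. taboo_vec d P v avoid_zero N j)
      = (\<Sum>j<d. \<Sum>i<d. v i * taboo_vec d P (\<lambda>k. if k = i then 1 else 0) avoid_zero N j)"
    by (intro sum.cong refl taboo_vec_linear) auto
  also have "\<dots> = (\<Sum>i<d. v i * (\<Sum>j<d. taboo_vec d P (\<lambda>k. if k = i then 1 else 0) avoid_zero N j))"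
    by (subst sum.swap) (simp add: sum_distrib_left)
  also have "\<dots> \<le> (\<Sum>i<d. v i * (1 - \<eta>))"
  proof (intro sum_mono)
    fix i assume i: "i \<in> {..<d}"
    show "v i * (\<Sum>j<d. taboo_vec d P (\<lambda>k. if k = i then 1 else 0) avoid_zero N j) \<le> v i * (1 - \<eta>)"
    proof (cases "i = 0")
      case True then show ?thesis using v0 by simp
    next
      case False then show ?thesis using i contr[of i] v[of i] by (intro mult_left_mono) auto
    qed
  qed
  also have "(\<Sum>i<d. v i * (1 - \<eta>)) = (1 - \<eta>) * (\<Sum>j<d. v j)"
    by (subst mult.commute) (simp add: sum_distrib_right)
  finally show ?thesis .
qed

lemma sum_taboo_vec_mult_le:
  assumes v: "\<And>i. i < d \<Longrightarrow> 0 \<le> v i" and v0: "v 0 = 0"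
  shows "(\<Sum>j<d. taboo_vec d P v avoid_zero (m * N) j) \<le> (1 - \<eta>) ^ m * (\<Sum>j<d. v j)"
proof (induction m)
  case 0
  then show ?case by (simp add: avoid_zero_def)
next
  case (Suc m)
  define w where "w = taboo_vec d P v avoid_zero (m * N)"
  have "(\<Sum>j<d. taboo_vec d P v avoid_zero (Suc m * N) j) = (\<Sum>j<d. taboo_vec d P w avoid_zero N j)"
  proof -
    have "taboo_vec d P v avoid_zero (m * N + N) j = taboo_vec d P w avoid_zero N j" for j
      unfolding w_def by (subst taboo_vec_add) (simp add: avoid_zero_shift)
    then show ?thesis by (simp add: add.commute)
  qed
  also have "\<dots> \<le> (1 - \<eta>) * (\<Sum>j<d. w j)"
    by (rule sum_taboo_vec_contract) (auto simp: w_def taboo_vec_nonneg v taboo_vec_zero v0)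
  also have "\<dots> \<le> (1 - \<eta>) * ((1 - \<eta>) ^ m * (\<Sum>j<d. v j))"
    using Suc eta unfolding w_def by (intro mult_left_mono) auto
  finally show ?case by simp
qed

lemma sum_taboo_vec_le_power:
  assumes v: "\<And>i. i < d \<Longrightarrow> 0 \<le> v i" and v0: "v 0 = 0"
  shows "(\<Sum>j<d. taboo_vec d P v avoid_zero t j) \<le> (1 - \<eta>) ^ (t div N) * (\<Sum>j<d. v j)"
proof -
  have "(t div N) * N \<le> t" by simp
  then have "(\<Sum>j<d. taboo_vec d P v avoid_zero t j) \<le> (\<Sum>j<d. taboo_vec d P v avoid_zero ((t div N) * N) j)"
    by (intro sum_taboo_vec_antimono v)
  also have "\<dots> \<le> (1 - \<eta>) ^ (t div N) * (\<Sum>j<d. v j)" by (rule sum_taboo_vec_mult_le[where v=v, OF v v0])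
  finally show ?thesis .
qed

end

section \<open>Markov additive processes conditioned on the modulating path\<close>

definition step_law ::
    "(nat \<Rightarrow> real measure) \<Rightarrow> (nat \<Rightarrow> nat \<Rightarrow> real measure) \<Rightarrow> (nat \<Rightarrow> nat) \<Rightarrow> nat \<Rightarrow> real measure" where
  "step_law \<beta> H p k = (if k = 0 then \<beta> (p 0) else H (p (k - 1)) (p k))"

definition path_weight :: "(nat \<Rightarrow> real measure) \<Rightarrow> (nat \<Rightarrow> nat \<Rightarrow> real measure) \<Rightarrow> nat \<Rightarrow> (nat \<Rightarrow> nat) \<Rightarrow> real" where
  "path_weight \<beta> H n p = (\<Prod>k\<le>n. measure (step_law \<beta> H p k) UNIV)"

locale MAP_process =
  fixes M :: "'a measure" and d :: nat and \<beta> :: "nat \<Rightarrow> real measure"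
    and H :: "nat \<Rightarrow> nat \<Rightarrow> real measure" and X :: "nat \<Rightarrow> 'a \<Rightarrow> real" and J :: "nat \<Rightarrow> 'a \<Rightarrow> nat"
  assumes map: "MAP M d \<beta> H X J"
begin

sublocale prob_space M
  using map by (simp add: MAP_def)

lemma X_measurable[measurable]: "X n \<in> borel_measurable M" using map by (simp add: MAP_def)
lemma J_measurable[measurable]: "J n \<in> measurable M (count_space UNIV)" using map by (simp add: MAP_def)
lemma J_lt: "\<omega> \<in> space M \<Longrightarrow> J n \<omega> < d" using map by (simp add: MAP_def)
lemma sets_beta: "i < d \<Longrightarrow> sets (\<beta> i) = sets borel" using map by (simp add: MAP_def)
lemma sets_H: "i < d \<Longrightarrow> j < d \<Longrightarrow> sets (H i j) = sets borel" using map by (simp add: MAP_def)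
lemma finite_measure_beta: "i < d \<Longrightarrow> finite_measure (\<beta> i)" using map by (simp add: MAP_def)
lemma finite_measure_H: "i < d \<Longrightarrow> j < d \<Longrightarrow> finite_measure (H i j)" using map by (simp add: MAP_def)
lemma beta_total_mass: "(\<Sum>i<d. measure (\<beta> i) UNIV) = 1" using map by (simp add: MAP_def)

lemma MAP_fdd: "\<forall>n (is :: nat \<Rightarrow> nat) (A :: nat \<Rightarrow> real set).
          (\<forall>k\<le>n. is k < d \<and> A k \<in> sets borel) \<longrightarrow>
          measure M {\<omega>\<in>space M. \<forall>k\<le>n. J k \<omega> = is k \<and> X k \<omega> \<in> A k}
            = measure (\<beta> (is 0)) (A 0) * (\<Prod>k\<in>{1..n}. measure (H (is (k - 1)) (is k)) (A k))"
  using map unfolding MAP_def by (elim conjE) assumption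

lemma prob_path_increments:
  assumes "\<And>k. k \<le> n \<Longrightarrow> p k < d" "\<And>k. k \<le> n \<Longrightarrow> A k \<in> sets borel"
  shows "measure M {\<omega>\<in>space M. \<forall>k\<le>n. J k \<omega> = p k \<and> X k \<omega> \<in> A k} = (\<Prod>k\<le>n. measure (step_law \<beta> H p k) (A k))"
proof -
  have "measure M {\<omega>\<in>space M. \<forall>k\<le>n. J k \<omega> = p k \<and> X k \<omega> \<in> A k}
      = measure (\<beta> (p 0)) (A 0) * (\<Prod>k\<in>{1..n}. measure (H (p (k - 1)) (p k)) (A k))"
    using MAP_fdd assms by auto
  also have "\<dots> = (\<Prod>k\<in>insert 0 {1..n}. measure (step_law \<beta> H p k) (A k))"
    by (subst prod.insert) (auto simp: step_law_def intro!: prod.cong)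
  also have "insert 0 {1..n} = {..n}" by auto
  finally show ?thesis .
qed

definition path_event :: "nat \<Rightarrow> (nat \<Rightarrow> nat) \<Rightarrow> 'a set" where
  "path_event n p = {\<omega>\<in>space M. \<forall>k\<le>n. J k \<omega> = p k}"

lemma path_event_sets[measurable]: "path_event n p \<in> sets M"
proof -
  have "path_event n p = space M \<inter> (\<Inter>k\<in>{..n}. J k -` {p k} \<inter> space M)" unfolding path_event_def by auto
  moreover have "J k -` {p k} \<inter> space M \<in> sets M" for k
    by (rule measurable_sets[OF J_measurable]) auto
  then have "(\<Inter>k\<in>{..n}. J k -` {p k} \<inter> space M) \<in> sets M"
    by (intro sets.finite_INT) auto
  ultimately show ?thesis by auto
qed

lemma sets_X_in: "(\<And>k. k \<le> n \<Longrightarrow> A k \<in> sets borel) \<Longrightarrow> {\<omega>\<in>space M. \<forall>k\<le>n. X k \<omega> \<in> A k} \<in> sets M"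
proof -
  assume A: "\<And>k. k \<le> n \<Longrightarrow> A k \<in> sets borel"
  have "{\<omega>\<in>space M. \<forall>k\<le>n. X k \<omega> \<in> A k} = space M \<inter> (\<Inter>k\<in>{..n}. X k -` A k \<inter> space M)" by auto
  moreover have "X k -` A k \<inter> space M \<in> sets M" if "k \<le> n" for k
    by (rule measurable_sets[OF X_measurable A[OF that]])
  then have "(\<Inter>k\<in>{..n}. X k -` A k \<inter> space M) \<in> sets M"
    by (intro sets.finite_INT) auto
  ultimately show ?thesis by auto
qed

lemma prob_path_event:
  assumes "\<And>k. k \<le> n \<Longrightarrow> p k < d"
  shows "prob (path_event n p) = path_weight \<beta> H n p"
  using prob_path_increments[OF assms, where A="\<lambda>_. UNIV"] unfolding path_event_def path_weight_def by simp

lemma step_law_mass_pos: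
  assumes "0 < path_weight \<beta> H n p" "k \<le> n"
  shows "0 < measure (step_law \<beta> H p k) UNIV"
proof -
  have "(\<Prod>k\<le>n. measure (step_law \<beta> H p k) UNIV) \<noteq> 0"
    using assms(1) unfolding path_weight_def by (metis less_irrefl)
  then have "measure (step_law \<beta> H p k) UNIV \<noteq> 0"
    using assms(2) by (subst (asm) prod_zero_iff) auto
  then show ?thesis using measure_nonneg[of "step_law \<beta> H p k" UNIV] by linarith
qed

definition path_cond :: "nat \<Rightarrow> (nat \<Rightarrow> nat) \<Rightarrow> 'a measure" where
  "path_cond n p = uniform_measure M (path_event n p)"

context
  fixes n p
  assumes pd: "\<And>k. k \<le> n \<Longrightarrow> p k < d" and w: "0 < path_weight \<beta> H n p"
begin

lemma prob_space_path_cond: "prob_space (path_cond n p)"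
  unfolding path_cond_def using prob_path_event[OF pd] w
  by (intro prob_space_uniform_measure) (auto simp: emeasure_eq_measure)

lemma measure_path_cond:
  "B \<in> sets M \<Longrightarrow> measure (path_cond n p) B = measure M (path_event n p \<inter> B) / path_weight \<beta> H n p"
  unfolding path_cond_def using prob_path_event[OF pd] w
  by (subst measure_uniform_measure) (auto simp: emeasure_eq_measure)

lemma path_cond_all_X_in:
  assumes A: "\<And>k. k \<le> n \<Longrightarrow> A k \<in> sets borel"
  shows "measure (path_cond n p) {\<omega>\<in>space M. \<forall>k\<le>n. X k \<omega> \<in> A k}
           = (\<Prod>k\<le>n. measure (step_law \<beta> H p k) (A k) / measure (step_law \<beta> H p k) UNIV)"
proof -
  have "path_event n p \<inter> {\<omega>\<in>space M. \<forall>k\<le>n. X k \<omega> \<in> A k}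
      = {\<omega>\<in>space M. \<forall>k\<le>n. J k \<omega> = p k \<and> X k \<omega> \<in> A k}"
    unfolding path_event_def by auto
  then show ?thesis
    using A prob_path_increments[OF pd A]
    by (simp add: measure_path_cond sets_X_in path_weight_def prod_dividef)
qed

lemma path_cond_X_in:
  assumes k: "k \<le> n" and A: "A \<in> sets borel"
  shows "measure (path_cond n p) {\<omega>\<in>space M. X k \<omega> \<in> A}
           = measure (step_law \<beta> H p k) A / measure (step_law \<beta> H p k) UNIV"
proof -
  have "{\<omega>\<in>space M. X k \<omega> \<in> A} = {\<omega>\<in>space M. \<forall>j\<le>n. X j \<omega> \<in> (if j = k then A else UNIV)}"
    using k by auto
  also have "measure (path_cond n p) \<dots>
      = (\<Prod>j\<le>n. measure (step_law \<beta> H p j) (if j = k then A else UNIV) / measure (step_law \<beta> H p j) UNIV)"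
    using A by (intro path_cond_all_X_in) auto
  also have "\<dots> = (\<Prod>j\<in>{..n}.
      if j = k then measure (step_law \<beta> H p k) A / measure (step_law \<beta> H p k) UNIV else 1)"
    using step_law_mass_pos[OF w] by (intro prod.cong) (auto simp: less_le)
  also have "\<dots> = measure (step_law \<beta> H p k) A / measure (step_law \<beta> H p k) UNIV"
    using k by (subst prod.delta) auto
  finally show ?thesis .
qed

lemma path_cond_indep_vars: "prob_space.indep_vars (path_cond n p) (\<lambda>_. borel) X {..n}"
proof -
  interpret P: prob_space "path_cond n p" by (rule prob_space_path_cond)
  have space: "space (path_cond n p) = space M" by (simp add: path_cond_def)
  show ?thesis
  proof (subst P.indep_vars_finite[where E="\<lambda>_. sets borel"])
    show "\<forall>A\<in>(\<Pi> i\<in>{..n}. sets (borel :: real measure)).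
            P.prob (\<Inter>j\<in>{..n}. X j -` A j \<inter> space (path_cond n p))
              = (\<Prod>j\<in>{..n}. P.prob (X j -` A j \<inter> space (path_cond n p)))"
    proof
      fix A assume A: "A \<in> (\<Pi> i\<in>{..n}. sets (borel :: real measure))"
      have "(\<Inter>j\<in>{..n}. X j -` A j \<inter> space (path_cond n p)) = {\<omega>\<in>space M. \<forall>k\<le>n. X k \<omega> \<in> A k}"
        by (auto simp: space)
      moreover have "X j -` A j \<inter> space (path_cond n p) = {\<omega>\<in>space M. X j \<omega> \<in> A j}" for j
        by (auto simp: space)
      ultimately show "P.prob (\<Inter>j\<in>{..n}. X j -` A j \<inter> space (path_cond n p))
          = (\<Prod>j\<in>{..n}. P.prob (X j -` A j \<inter> space (path_cond n p)))"
        using A by (simp add: path_cond_all_X_in path_cond_X_in Pi_iff)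
    qed
  next
    show "P.random_variable borel (X i)" for i
      by (simp add: path_cond_def measurable_cong_sets[OF sets_uniform_measure refl])
  qed (auto simp: Int_stable_def sets.sigma_sets_eq[of borel, simplified])
qed

end

text \<open>Conditionally on the path of \<open>J\<close>, the increments are independent with laws \<open>step_law\<close>;
  this reduces tail bounds for sums along a path to \<open>indep_sum_tail_le\<close>.\<close>
lemma path_event_sum_tail_le:
  assumes pd: "\<And>k. k \<le> n \<Longrightarrow> p k < d" and lo: "lo \<le> n" and F: "nonneg_distribution F" and B: "0 \<le> B" "B \<le> 1"
    and dom: "\<And>i t. i \<in> {lo..n} \<Longrightarrow>
                measure (step_law \<beta> H p i) {t<..}
                  \<le> thin_tail F B k (t - x0) * measure (step_law \<beta> H p i) UNIV"
  shows "measure M (path_event n p \<inter> {\<omega>\<in>space M. x < (\<Sum>i\<in>{lo..n}. X i \<omega>)})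
           \<le> path_weight \<beta> H n p * thin_tail F B (k * (n - lo + 1)) (x - (n - lo + 1) * x0)"
proof (cases "path_weight \<beta> H n p = 0")
  case True
  have "measure M (path_event n p \<inter> {\<omega>\<in>space M. x < (\<Sum>i\<in>{lo..n}. X i \<omega>)}) \<le> measure M (path_event n p)"
    by (intro finite_measure_mono) auto
  then show ?thesis using prob_path_event[OF pd] True by simp
next
  case False
  then have w: "0 < path_weight \<beta> H n p" by (simp add: less_le path_weight_def prod_nonneg)
  interpret P: prob_space "path_cond n p" by (rule prob_space_path_cond[OF pd w])
  have space: "space (path_cond n p) = space M" by (simp add: path_cond_def)
  have tails: "P.prob {\<omega>\<in>space (path_cond n p). t < X i \<omega>} \<le> thin_tail F B k (t - x0)"
    if i: "i \<in> {lo..n}" for i t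
  proof -
    have "P.prob {\<omega>\<in>space (path_cond n p). t < X i \<omega>}
        = measure (step_law \<beta> H p i) {t<..} / measure (step_law \<beta> H p i) UNIV"
      using i path_cond_X_in[OF pd w, of i "{t<..}"] by (simp add: space)
    also have "\<dots> \<le> thin_tail F B k (t - x0)"
      using dom[OF i, of t] step_law_mass_pos[OF w, of i] i by (simp add: divide_le_eq)
    finally show ?thesis .
  qed
  have "P.prob {\<omega>\<in>space (path_cond n p). x < (\<Sum>i\<in>{lo..lo + (n - lo)}. X i \<omega>)}
         \<le> thin_tail F B (k * (n - lo + 1)) (x - (n - lo + 1) * x0)"
    using P.indep_sum_tail_le[OF F B path_cond_indep_vars[OF pd w], of lo n k x0 "n - lo" x] tails lo
    by (auto simp: ac_simps)
  then show ?thesis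
    using lo w measure_path_cond[OF pd w, of "{\<omega>\<in>space M. x < (\<Sum>i\<in>{lo..n}. X i \<omega>)}"]
    by (simp add: space divide_le_eq mult.commute of_nat_diff ac_simps)
qed

definition taboo_event :: "nat \<Rightarrow> (nat \<Rightarrow> nat set) \<Rightarrow> 'a set" where
  "taboo_event n C = {\<omega>\<in>space M. \<forall>k\<le>n. J k \<omega> \<in> C k}"

definition taboo_paths :: "nat \<Rightarrow> (nat \<Rightarrow> nat set) \<Rightarrow> (nat \<Rightarrow> nat) set" where
  "taboo_paths n C = PiE {..n} (\<lambda>k. C k \<inter> {..<d})"

lemma taboo_event_sets[measurable]: "taboo_event n C \<in> sets M"
proof -
  have "taboo_event n C = space M \<inter> (\<Inter>k\<in>{..n}. J k -` C k \<inter> space M)" unfolding taboo_event_def by auto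
  moreover have "J k -` C k \<inter> space M \<in> sets M" for k
    by (rule measurable_sets[OF J_measurable]) auto
  then have "(\<Inter>k\<in>{..n}. J k -` C k \<inter> space M) \<in> sets M"
    by (intro sets.finite_INT) auto
  ultimately show ?thesis by auto
qed

lemma finite_taboo_paths: "finite (taboo_paths n C)"
  unfolding taboo_paths_def by (intro finite_PiE) auto

lemma taboo_paths_lt: "p \<in> taboo_paths n C \<Longrightarrow> k \<le> n \<Longrightarrow> p k < d"
  unfolding taboo_paths_def by (auto simp: PiE_iff)

lemma measure_taboo_event_split:
  assumes S: "S \<in> sets M"
  shows "measure M (taboo_event n C \<inter> S) = (\<Sum>p\<in>taboo_paths n C. measure M (path_event n p \<inter> S))"
proof -
  have eq: "taboo_event n C \<inter> S = (\<Union>p\<in>taboo_paths n C. path_event n p \<inter> S)"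
  proof (intro equalityI subsetI)
    fix \<omega> assume w: "\<omega> \<in> taboo_event n C \<inter> S"
    then have "\<omega> \<in> space M" unfolding taboo_event_def by auto
    define p where "p = restrict (\<lambda>k. J k \<omega>) {..n}"
    have "p \<in> taboo_paths n C" using w J_lt[OF \<open>\<omega> \<in> space M\<close>]
      unfolding p_def taboo_paths_def taboo_event_def by auto
    moreover have "\<omega> \<in> path_event n p \<inter> S" using w unfolding path_event_def p_def taboo_event_def by auto
    ultimately show "\<omega> \<in> (\<Union>p\<in>taboo_paths n C. path_event n p \<inter> S)" by auto
  next
    fix \<omega> assume "\<omega> \<in> (\<Union>p\<in>taboo_paths n C. path_event n p \<inter> S)"
    then show "\<omega> \<in> taboo_event n C \<inter> S" unfolding path_event_def taboo_event_def taboo_paths_def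
      by (auto simp: PiE_iff)
  qed
  have disj: "disjoint_family_on (\<lambda>p. path_event n p \<inter> S) (taboo_paths n C)"
    unfolding disjoint_family_on_def
  proof (intro ballI impI)
    fix p q assume p: "p \<in> taboo_paths n C" and q: "q \<in> taboo_paths n C" and ne: "p \<noteq> q"
    from p q ne obtain k where "k \<le> n" "p k \<noteq> q k"
      unfolding taboo_paths_def by (metis PiE_ext atMost_iff)
    then show "path_event n p \<inter> S \<inter> (path_event n q \<inter> S) = {}" unfolding path_event_def by auto
  qed
  have "measure M (\<Union>p\<in>taboo_paths n C. path_event n p \<inter> S)
      = (\<Sum>p\<in>taboo_paths n C. measure M (path_event n p \<inter> S))"
    by (rule finite_measure_finite_Union[OF finite_taboo_paths _ disj]) (use S in auto)
  with eq show ?thesis by simp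
qed

lemma path_weight_upd_Suc: "path_weight \<beta> H (Suc n) (p(Suc n := j))
    = path_weight \<beta> H n p * measure (H (p n) j) UNIV"
proof -
  have "path_weight \<beta> H (Suc n) (p(Suc n := j)) = (\<Prod>k\<le>n. measure (step_law \<beta> H (p(Suc n := j)) k) UNIV)
      * measure (step_law \<beta> H (p(Suc n := j)) (Suc n)) UNIV"
    unfolding path_weight_def by simp
  also have "(\<Prod>k\<le>n. measure (step_law \<beta> H (p(Suc n := j)) k) UNIV) = path_weight \<beta> H n p"
    unfolding path_weight_def by (intro prod.cong) (auto simp: step_law_def)
  also have "measure (step_law \<beta> H (p(Suc n := j)) (Suc n)) UNIV = measure (H (p n) j) UNIV"
    by (simp add: step_law_def)
  finally show ?thesis .
qed

lemma path_event_Suc: "path_event n p \<inter> {\<omega>\<in>space M. J (Suc n) \<omega> = j} = path_event (Suc n) (p(Suc n := j))"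
  unfolding path_event_def by (auto simp: le_Suc_eq)

lemma path_event_J_eq: "path_event n p \<inter> {\<omega>\<in>space M. J n \<omega> = i} = (if p n = i then path_event n p else {})"
  unfolding path_event_def by auto

lemma J_eq_sets[measurable]: "{\<omega>\<in>space M. J n \<omega> = j} \<in> sets M"
  by measurable

lemma measure_taboo_event_J_Suc:
  assumes j: "j < d"
  shows "measure M (taboo_event n C \<inter> {\<omega>\<in>space M. J (Suc n) \<omega> = j})
       = (\<Sum>i<d. measure M (taboo_event n C \<inter> {\<omega>\<in>space M. J n \<omega> = i}) * measure (H i j) UNIV)"
proof -
  have "measure M (taboo_event n C \<inter> {\<omega>\<in>space M. J (Suc n) \<omega> = j})
      = (\<Sum>p\<in>taboo_paths n C. measure M (path_event n p \<inter> {\<omega>\<in>space M. J (Suc n) \<omega> = j}))"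
    by (rule measure_taboo_event_split) measurable
  also have "\<dots> = (\<Sum>p\<in>taboo_paths n C. path_weight \<beta> H n p * measure (H (p n) j) UNIV)"
  proof (intro sum.cong refl)
    fix p assume p: "p \<in> taboo_paths n C"
    have "measure M (path_event n p \<inter> {\<omega>\<in>space M. J (Suc n) \<omega> = j})
        = prob (path_event (Suc n) (p(Suc n := j)))"
      by (simp add: path_event_Suc)
    also have "\<dots> = path_weight \<beta> H (Suc n) (p(Suc n := j))"
      by (rule prob_path_event) (use taboo_paths_lt[OF p] j in \<open>auto simp: le_Suc_eq\<close>)
    finally show "measure M (path_event n p \<inter> {\<omega>\<in>space M. J (Suc n) \<omega> = j})
        = path_weight \<beta> H n p * measure (H (p n) j) UNIV"
      by (simp add: path_weight_upd_Suc)
  qed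
  also have "\<dots> = (\<Sum>i<d. \<Sum>p\<in>{p\<in>taboo_paths n C. p n = i}. path_weight \<beta> H n p * measure (H (p n) j) UNIV)"
    by (rule sum.group[symmetric]) (auto simp: finite_taboo_paths taboo_paths_lt)
  also have "\<dots> = (\<Sum>i<d. measure M (taboo_event n C \<inter> {\<omega>\<in>space M. J n \<omega> = i}) * measure (H i j) UNIV)"
  proof (intro sum.cong refl)
    fix i assume "i \<in> {..<d}"
    have "measure M (taboo_event n C \<inter> {\<omega>\<in>space M. J n \<omega> = i})
        = (\<Sum>p\<in>taboo_paths n C. measure M (path_event n p \<inter> {\<omega>\<in>space M. J n \<omega> = i}))"
      by (rule measure_taboo_event_split) measurable
    also have "\<dots> = (\<Sum>p\<in>taboo_paths n C. if p n = i then path_weight \<beta> H n p else 0)"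
      by (intro sum.cong refl) (auto simp: path_event_J_eq prob_path_event taboo_paths_lt)
    also have "\<dots> = (\<Sum>p\<in>{p\<in>taboo_paths n C. p n = i}. path_weight \<beta> H n p)"
      by (simp add: sum.inter_filter[symmetric] finite_taboo_paths)
    finally show "(\<Sum>p\<in>{p\<in>taboo_paths n C. p n = i}. path_weight \<beta> H n p * measure (H (p n) j) UNIV)
        = measure M (taboo_event n C \<inter> {\<omega>\<in>space M. J n \<omega> = i}) * measure (H i j) UNIV"
      by (simp add: sum_distrib_right)
  qed
  finally show ?thesis .
qed

lemma measure_taboo_event_J_eq: "j < d \<Longrightarrow> measure M (taboo_event n C \<inter> {\<omega>\<in>space M. J n \<omega> = j})
    = taboo_vec d (\<lambda>i j. measure (H i j) UNIV) (\<lambda>i. measure (\<beta> i) UNIV) C n j"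
proof (induction n arbitrary: j)
  case 0
  show ?case
  proof (cases "j \<in> C 0")
    case True
    have "taboo_event 0 C \<inter> {\<omega>\<in>space M. J 0 \<omega> = j} = path_event 0 (\<lambda>_. j)"
      unfolding taboo_event_def path_event_def using True by auto
    then show ?thesis using True prob_path_event[of 0 "\<lambda>_. j"] 0 by (simp add: path_weight_def step_law_def)
  next
    case False
    have "taboo_event 0 C \<inter> {\<omega>\<in>space M. J 0 \<omega> = j} = {}" unfolding taboo_event_def using False by auto
    then show ?thesis using False by simp
  qed
next
  case (Suc n)
  show ?case
  proof (cases "j \<in> C (Suc n)")
    case True
    have "taboo_event (Suc n) C \<inter> {\<omega>\<in>space M. J (Suc n) \<omega> = j} = taboo_event n C
        \<inter> {\<omega>\<in>space M. J (Suc n) \<omega> = j}"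
      unfolding taboo_event_def using True by (auto simp: le_Suc_eq)
    then show ?thesis using True measure_taboo_event_J_Suc[OF Suc.prems, of n C] Suc.IH by simp
  next
    case False
    have "taboo_event (Suc n) C \<inter> {\<omega>\<in>space M. J (Suc n) \<omega> = j} = {}" unfolding taboo_event_def using False
      by auto
    then show ?thesis using False by simp
  qed
qed

lemma measure_taboo_event: "measure M (taboo_event n C)
    = (\<Sum>j<d. taboo_vec d (\<lambda>i j. measure (H i j) UNIV) (\<lambda>i. measure (\<beta> i) UNIV) C n j)"
proof -
  have "taboo_event n C = (\<Union>j\<in>{..<d}. taboo_event n C \<inter> {\<omega>\<in>space M. J n \<omega> = j})"
    using J_lt unfolding taboo_event_def by auto
  moreover have "measure M (\<Union>j\<in>{..<d}. taboo_event n C \<inter> {\<omega>\<in>space M. J n \<omega> = j})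
      = (\<Sum>j<d. measure M (taboo_event n C \<inter> {\<omega>\<in>space M. J n \<omega> = j}))"
    by (rule finite_measure_finite_Union) (auto simp: disjoint_family_on_def)
  ultimately have "measure M (taboo_event n C)
      = (\<Sum>j<d. measure M (taboo_event n C \<inter> {\<omega>\<in>space M. J n \<omega> = j}))"
    by simp
  then show ?thesis by (simp add: measure_taboo_event_J_eq)
qed

lemma taboo_event_sum_tail_le:
  assumes F: "nonneg_distribution F" and B: "0 \<le> B" "B \<le> 1" and lo: "lo \<le> n"
    and dom: "\<And>p i t. p \<in> taboo_paths n C \<Longrightarrow> i \<in> {lo..n} \<Longrightarrow>
              measure (step_law \<beta> H p i) {t<..} \<le> thin_tail F B k (t - x0) * measure (step_law \<beta> H p i) UNIV"
  shows "measure M (taboo_event n C \<inter> {\<omega>\<in>space M. x < (\<Sum>i\<in>{lo..n}. X i \<omega>)})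
        \<le> measure M (taboo_event n C) * thin_tail F B (k * (n - lo + 1)) (x - real (n - lo + 1) * x0)"
proof -
  have S: "{\<omega>\<in>space M. x < (\<Sum>i\<in>{lo..n}. X i \<omega>)} \<in> sets M" by measurable
  have "measure M (taboo_event n C \<inter> {\<omega>\<in>space M. x < (\<Sum>i\<in>{lo..n}. X i \<omega>)})
      = (\<Sum>p\<in>taboo_paths n C. measure M (path_event n p \<inter> {\<omega>\<in>space M. x < (\<Sum>i\<in>{lo..n}. X i \<omega>)}))"
    by (rule measure_taboo_event_split[OF S])
  also have "\<dots> \<le> (\<Sum>p\<in>taboo_paths n C.
      path_weight \<beta> H n p * thin_tail F B (k * (n - lo + 1)) (x - real (n - lo + 1) * x0))"
  proof (intro sum_mono)
    fix p assume p: "p \<in> taboo_paths n C"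
    show "measure M (path_event n p \<inter> {\<omega>\<in>space M. x < (\<Sum>i\<in>{lo..n}. X i \<omega>)})
        \<le> path_weight \<beta> H n p * thin_tail F B (k * (n - lo + 1)) (x - real (n - lo + 1) * x0)"
      using path_event_sum_tail_le[OF taboo_paths_lt[OF p] lo F B dom[OF p]] lo
      by (simp add: of_nat_diff ac_simps)
  qed
  also have "\<dots> = (\<Sum>p\<in>taboo_paths n C. path_weight \<beta> H n p)
      * thin_tail F B (k * (n - lo + 1)) (x - real (n - lo + 1) * x0)"
    by (simp add: sum_distrib_right)
  also have "(\<Sum>p\<in>taboo_paths n C. path_weight \<beta> H n p) = measure M (taboo_event n C)"
  proof -
    have "measure M (taboo_event n C \<inter> space M)
        = (\<Sum>p\<in>taboo_paths n C. measure M (path_event n p \<inter> space M))"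
      by (rule measure_taboo_event_split) simp
    moreover have "path_event n p \<inter> space M = path_event n p" for p unfolding path_event_def by auto
    moreover have "taboo_event n C \<inter> space M = taboo_event n C" unfolding taboo_event_def by auto
    ultimately show ?thesis by (simp add: prob_path_event taboo_paths_lt)
  qed
  finally show ?thesis .
qed

end

section \<open>Visits of the modulating chain to state 0\<close>

definition first_zero_at :: "nat \<Rightarrow> nat \<Rightarrow> nat set" where
  "first_zero_at a k = (if k < a then nonzero else {0})"

definition zero_only_at :: "nat \<Rightarrow> nat \<Rightarrow> nat set" where
  "zero_only_at a k = (if k = a then {0} else nonzero)"

definition zeros_at :: "nat \<Rightarrow> nat \<Rightarrow> nat \<Rightarrow> nat set" where
  "zeros_at a l k = (if k < a then nonzero else if k = a then {0} else if k < a + l then nonzero else {0})"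

context MAP_process
begin

lemma tau_cases:
  assumes w: "\<omega> \<in> space M" and m: "m1 < m2" "J m1 \<omega> = 0" "J m2 \<omega> = 0"
  obtains a l where "1 \<le> l" "\<omega> \<in> taboo_event (a + l) (zeros_at a l)" "tau0 J \<omega> = a" "tau1 J \<omega> = a + l"
proof -
  define a where "a = tau0 J \<omega>"
  have ex0: "\<exists>n. J n \<omega> = 0" using m by auto
  have Ja: "J a \<omega> = 0" unfolding a_def tau0_def by (rule LeastI_ex[OF ex0])
  have lt: "k < a \<Longrightarrow> J k \<omega> \<noteq> 0" for k unfolding a_def tau0_def by (rule not_less_Least)
  have am: "a \<le> m1" unfolding a_def tau0_def by (rule Least_le) (use m in auto)
  define b where "b = tau1 J \<omega>"
  have ex1: "\<exists>n. a < n \<and> J n \<omega> = 0" using m am by (intro exI[of _ m2]) auto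
  have Jb: "a < b \<and> J b \<omega> = 0" unfolding b_def tau1_def a_def[symmetric] by (rule LeastI_ex[OF ex1])
  have lt1: "a < k \<Longrightarrow> k < b \<Longrightarrow> J k \<omega> \<noteq> 0" for k
    using not_less_Least[of k "\<lambda>n. a < n \<and> J n \<omega> = 0"] unfolding b_def tau1_def a_def[symmetric] by auto
  show ?thesis
  proof (rule that[of "b - a" a])
    show "1 \<le> b - a" using Jb by arith
    show "\<omega> \<in> taboo_event (a + (b - a)) (zeros_at a (b - a))"
      unfolding taboo_event_def zeros_at_def nonzero_def using w Ja Jb lt lt1 by auto
    show "tau0 J \<omega> = a" by (simp add: a_def)
    show "tau1 J \<omega> = a + (b - a)" using Jb by (simp add: b_def)
  qed
qed

lemma first_zero_at_tau0:
  assumes w: "\<omega> \<in> space M" and m: "J m \<omega> = 0"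
  shows "\<omega> \<in> taboo_event (tau0 J \<omega>) (first_zero_at (tau0 J \<omega>))"
proof -
  define a where "a = tau0 J \<omega>"
  have ex0: "\<exists>n. J n \<omega> = 0" using m by auto
  have Ja: "J a \<omega> = 0" unfolding a_def tau0_def by (rule LeastI_ex[OF ex0])
  have lt: "k < a \<Longrightarrow> J k \<omega> \<noteq> 0" for k unfolding a_def tau0_def by (rule not_less_Least)
  show ?thesis unfolding a_def[symmetric] taboo_event_def first_zero_at_def nonzero_def using w Ja lt
    by auto
qed

lemma tau0_first_zero_at: "\<omega> \<in> taboo_event a (first_zero_at a) \<Longrightarrow> tau0 J \<omega> = a"
proof -
  assume w: "\<omega> \<in> taboo_event a (first_zero_at a)"
  have h: "\<And>k. k \<le> a \<Longrightarrow> J k \<omega> \<in> first_zero_at a k" using w by (simp add: taboo_event_def)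
  have Ja: "J a \<omega> = 0" using h[of a] by (simp add: first_zero_at_def)
  have "a \<le> y" if "J y \<omega> = 0" for y
  proof (rule ccontr)
    assume "\<not> a \<le> y"
    then have "y < a" by simp
    with h[of y] that show False by (simp add: first_zero_at_def nonzero_def)
  qed
  then show ?thesis unfolding tau0_def by (intro Least_equality Ja)
qed

definition at_most_one_zero :: "'a set" where
  "at_most_one_zero = {\<omega>\<in>space M. \<not> (\<exists>m1 m2. m1 < m2 \<and> J m1 \<omega> = 0 \<and> J m2 \<omega> = 0)}"

lemma at_most_one_zero_sets[measurable]: "at_most_one_zero \<in> sets M"
proof -
  have "at_most_one_zero = space M - (\<Union>m1. \<Union>m2.
      if m1 < m2 then {\<omega>\<in>space M. J m1 \<omega> = 0} \<inter> {\<omega>\<in>space M. J m2 \<omega> = 0} else {})"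
    unfolding at_most_one_zero_def by (auto split: if_splits) (metis less_irrefl)
  also have "\<dots> \<in> sets M"
    by (intro sets.Diff sets.top sets.countable_UN) (auto intro: sets.Int)
  finally show ?thesis .
qed

lemma DeltaB0_cover:
  "{\<omega>\<in>space M. x < DeltaB X J 0 \<omega>} \<subseteq>
     at_most_one_zero \<union> (\<Union>a. taboo_event a (first_zero_at a) \<inter> {\<omega>\<in>space M. x < (\<Sum>i\<in>{0..a}. X i \<omega>)})"
proof
  fix \<omega> assume \<omega>: "\<omega> \<in> {\<omega>\<in>space M. x < DeltaB X J 0 \<omega>}"
  show "\<omega> \<in> at_most_one_zero \<union> (\<Union>a. taboo_event a (first_zero_at a) \<inter> {\<omega>\<in>space M. x < (\<Sum>i\<in>{0..a}. X i \<omega>)})"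
  proof (cases "\<omega> \<in> at_most_one_zero")
    case False
    then obtain m1 m2 where m: "m1 < m2" "J m1 \<omega> = 0" "J m2 \<omega> = 0"
      using \<omega> unfolding at_most_one_zero_def by auto
    have "DeltaB X J 0 \<omega> = (\<Sum>i\<in>{0..tau0 J \<omega>}. X i \<omega>)"
      unfolding DeltaB_def partial_sum_def by (simp add: atLeast0AtMost)
    then show ?thesis using \<omega> first_zero_at_tau0[of \<omega> m1] m by auto
  qed simp
qed

lemma DeltaB1_cover:
  "{\<omega>\<in>space M. x < DeltaB X J 1 \<omega>} \<subseteq> at_most_one_zero \<union>
     (\<Union>a. \<Union>l. taboo_event (a + Suc l) (zeros_at a (Suc l)) \<inter> {\<omega>\<in>space M. x < (\<Sum>i\<in>{Suc a..a + Suc l}. X i \<omega>)})"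
proof
  fix \<omega> assume \<omega>: "\<omega> \<in> {\<omega>\<in>space M. x < DeltaB X J 1 \<omega>}"
  show "\<omega> \<in> at_most_one_zero \<union>
     (\<Union>a. \<Union>l. taboo_event (a + Suc l) (zeros_at a (Suc l)) \<inter> {\<omega>\<in>space M. x < (\<Sum>i\<in>{Suc a..a + Suc l}. X i \<omega>)})"
  proof (cases "\<omega> \<in> at_most_one_zero")
    case False
    then obtain m1 m2 where m: "m1 < m2" "J m1 \<omega> = 0" "J m2 \<omega> = 0"
      using \<omega> unfolding at_most_one_zero_def by auto
    obtain a l where al: "1 \<le> l" "\<omega> \<in> taboo_event (a + l) (zeros_at a l)" "tau0 J \<omega> = a" "tau1 J \<omega> = a + l"
      using \<omega> m by (auto elim: tau_cases)
    obtain l' where l': "l = Suc l'" using al(1) by (cases l) auto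
    have "DeltaB X J 1 \<omega> = (\<Sum>i\<in>{Suc a..a + l}. X i \<omega>)"
      unfolding DeltaB_def partial_sum_def al(3,4) using sum_atMost_split[of a "a + l" "\<lambda>i. X i \<omega>"] by simp
    then show ?thesis using \<omega> al(2) unfolding l' by auto
  qed simp
qed

end

locale MAP_recurrent = MAP_process M d \<beta> H X J + zero_recurrent d "\<lambda>i j. measure (H i j) UNIV" N \<eta>
  for M :: "'a measure" and d \<beta> H X J N \<eta>
begin

abbreviation "trans_mass \<equiv> \<lambda>i j. measure (H i j) UNIV"
abbreviation "init_mass \<equiv> \<lambda>i. measure (\<beta> i) UNIV"

lemma measure_never_zero: "measure M (taboo_event L (\<lambda>_. nonzero)) \<le> (1 - \<eta>) ^ (L div N)"
proof -
  have "measure M (taboo_event L (\<lambda>_. nonzero)) = (\<Sum>j<d. taboo_vec d trans_mass init_mass (\<lambda>_. nonzero) L j)"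
    by (rule measure_taboo_event)
  also have "\<dots> = (\<Sum>j<d. taboo_vec d trans_mass (\<lambda>j. if j \<in> nonzero then init_mass j else 0) avoid_zero L j)"
    by (subst taboo_vec_restrict) (intro sum.cong refl taboo_vec_cong, auto simp: avoid_zero_def)
  also have "\<dots> \<le> (1 - \<eta>) ^ (L div N) * (\<Sum>j<d. (\<lambda>j. if j \<in> nonzero then init_mass j else 0) j)"
    by (rule sum_taboo_vec_le_power) (auto simp: nonzero_def)
  also have "\<dots> \<le> (1 - \<eta>) ^ (L div N) * 1"
  proof (intro mult_left_mono)
    show "(\<Sum>j<d. (\<lambda>j. if j \<in> nonzero then init_mass j else 0) j) \<le> 1"
    proof -
      have "(\<Sum>j<d. (\<lambda>j. if j \<in> nonzero then init_mass j else 0) j) \<le> (\<Sum>j<d. init_mass j)"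
        by (intro sum_mono) auto
      then show ?thesis using beta_total_mass by simp
    qed
  qed (use eta in auto)
  finally show ?thesis by simp
qed

lemma measure_no_return:
  assumes L: "1 \<le> L"
  shows "measure M (taboo_event (a + L) (zero_only_at a))
      \<le> (1 - \<eta>) ^ ((L - 1) div N) * measure M (taboo_event a (first_zero_at a))"
proof -
  define C where "C = zero_only_at a"
  define w where "w = taboo_vec d trans_mass init_mass C a"
  have w: "\<And>i. i < d \<Longrightarrow> 0 \<le> w i" unfolding w_def by (intro taboo_vec_nonneg) auto
  have w0: "\<And>i. i \<noteq> 0 \<Longrightarrow> w i = 0" unfolding w_def by (cases a) (auto simp: C_def zero_only_at_def)
  define w1 where "w1 = taboo_vec d trans_mass w avoid_zero 1"
  have w1: "\<And>i. i < d \<Longrightarrow> 0 \<le> w1 i" unfolding w1_def by (intro taboo_vec_nonneg w)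
  have w10: "w1 0 = 0" unfolding w1_def by (simp add: avoid_zero_def nonzero_def)
  have "measure M (taboo_event (a + L) C) = (\<Sum>j<d. taboo_vec d trans_mass init_mass C (a + L) j)"
    by (rule measure_taboo_event)
  also have "\<dots> = (\<Sum>j<d. taboo_vec d trans_mass w avoid_zero L j)"
  proof (intro sum.cong refl)
    fix j
    have "(\<lambda>k. if k = 0 then UNIV else C (a + k)) = avoid_zero"
      by (auto simp: C_def zero_only_at_def avoid_zero_def fun_eq_iff)
    then show "taboo_vec d trans_mass init_mass C (a + L) j = taboo_vec d trans_mass w avoid_zero L j"
      unfolding w_def by (subst taboo_vec_add) simp
  qed
  also have "\<dots> = (\<Sum>j<d. taboo_vec d trans_mass w1 avoid_zero (L - 1) j)"
  proof (intro sum.cong refl)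
    fix j
    have "taboo_vec d trans_mass w avoid_zero (1 + (L - 1)) j = taboo_vec d trans_mass w1 avoid_zero (L - 1) j"
      unfolding w1_def by (subst taboo_vec_add) (simp add: avoid_zero_shift)
    then show "taboo_vec d trans_mass w avoid_zero L j = taboo_vec d trans_mass w1 avoid_zero (L - 1) j" using L by simp
  qed
  also have "\<dots> \<le> (1 - \<eta>) ^ ((L - 1) div N) * (\<Sum>j<d. w1 j)"
    by (rule sum_taboo_vec_le_power[where v=w1, OF w1 w10])
  also have "\<dots> \<le> (1 - \<eta>) ^ ((L - 1) div N) * (\<Sum>j<d. w j)"
    using eta unfolding w1_def by (intro mult_left_mono sum_taboo_vec_le w) auto
  also have "(\<Sum>j<d. w j) = measure M (taboo_event a (first_zero_at a))"
    unfolding w_def measure_taboo_event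
    by (intro sum.cong refl taboo_vec_cong) (auto simp: C_def zero_only_at_def first_zero_at_def)
  finally show ?thesis unfolding C_def .
qed

lemma disjoint_family_first_zero_at: "disjoint_family (\<lambda>a. taboo_event a (first_zero_at a))"
  unfolding disjoint_family_on_def using tau0_first_zero_at by blast

lemma sum_first_zero_at_le_1:
  assumes "finite A"
  shows "(\<Sum>a\<in>A. measure M (taboo_event a (first_zero_at a))) \<le> 1"
proof -
  have "(\<Sum>a\<in>A. measure M (taboo_event a (first_zero_at a)))
      = measure M (\<Union>a\<in>A. taboo_event a (first_zero_at a))"
    using assms disjoint_family_on_mono[OF subset_UNIV disjoint_family_first_zero_at]
    by (intro finite_measure_finite_Union[symmetric]) auto
  then show ?thesis by simp
qed

lemma summable_first_zero_at: "summable (\<lambda>a. measure M (taboo_event a (first_zero_at a)))"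
  by (rule summableI_nonneg_bounded[where x=1]) (auto intro: sum_first_zero_at_le_1)

lemma suminf_first_zero_at_le_1: "(\<Sum>a. measure M (taboo_event a (first_zero_at a))) \<le> 1"
  by (rule suminf_le_const[OF summable_first_zero_at]) (auto intro: sum_first_zero_at_le_1)

lemma at_most_one_zero_subset: "at_most_one_zero \<subseteq> taboo_event L (\<lambda>_. nonzero)
    \<union> (\<Union>a\<in>{..L}. taboo_event (a + L) (zero_only_at a))"
proof
  fix \<omega> assume w: "\<omega> \<in> at_most_one_zero"
  then have ws: "\<omega> \<in> space M"
    unfolding at_most_one_zero_def by auto
  have nz0: "\<not> (\<exists>m1 m2. m1 < m2 \<and> J m1 \<omega> = 0 \<and> J m2 \<omega> = 0)"
    using w unfolding at_most_one_zero_def by (rule CollectE) (rule conjunct2)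
  have nz: "J m2 \<omega> \<noteq> 0" if "m1 < m2" "J m1 \<omega> = 0" for m1 m2
  proof
    assume "J m2 \<omega> = 0"
    with that have "\<exists>m1 m2. m1 < m2 \<and> J m1 \<omega> = 0 \<and> J m2 \<omega> = 0" by (intro exI conjI)
    with nz0 show False by contradiction
  qed
  show "\<omega> \<in> taboo_event L (\<lambda>_. nonzero) \<union> (\<Union>a\<in>{..L}. taboo_event (a + L) (zero_only_at a))"
  proof (cases "\<exists>m\<le>L. J m \<omega> = 0")
    case False
    then have "\<omega> \<in> taboo_event L (\<lambda>_. nonzero)" using ws unfolding taboo_event_def nonzero_def by auto
    then show ?thesis by simp
  next
    case True
    then obtain m where m: "m \<le> L" "J m \<omega> = 0" by auto
    define a where "a = tau0 J \<omega>"
    have g: "\<omega> \<in> taboo_event a (first_zero_at a)" unfolding a_def by (rule first_zero_at_tau0[OF ws m(2)])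
    have "a \<le> m" unfolding a_def tau0_def by (rule Least_le) (rule m(2))
    have "\<omega> \<in> taboo_event (a + L) (zero_only_at a)"
      unfolding taboo_event_def
    proof (intro CollectI conjI allI impI ws)
      fix k assume "k \<le> a + L"
      show "J k \<omega> \<in> zero_only_at a k"
      proof (cases "k \<le> a")
        case True then show ?thesis using g unfolding taboo_event_def first_zero_at_def zero_only_at_def
          by auto
      next
        case False
        have "J a \<omega> = 0" using g unfolding taboo_event_def first_zero_at_def by auto
        then have "J k \<omega> \<noteq> 0" using nz[of a k] False by auto
        then show ?thesis using False by (simp add: zero_only_at_def nonzero_def)
      qed
    qed
    then show ?thesis using \<open>a \<le> m\<close> m(1) by auto
  qed
qed

lemma measure_at_most_one_zero: "measure M at_most_one_zero = 0"
proof -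
  have bound: "measure M at_most_one_zero \<le> 2 * (1 - \<eta>) ^ m" for m
  proof -
    define L where "L = m * N + 1"
    have L1: "1 \<le> L" unfolding L_def by simp
    have LN: "(L - 1) div N = m" "m \<le> L div N" unfolding L_def using N1
      by (auto simp: div_le_mono intro: order.trans[OF _ div_le_mono[of "m * N" "Suc (m * N)" N]])
    have q: "0 \<le> 1 - \<eta>" "1 - \<eta> \<le> 1" using eta by auto
    have "measure M at_most_one_zero
        \<le> measure M (taboo_event L (\<lambda>_. nonzero) \<union> (\<Union>a\<in>{..L}. taboo_event (a + L) (zero_only_at a)))"
      by (intro finite_measure_mono at_most_one_zero_subset) auto
    also have "\<dots> \<le> measure M (taboo_event L (\<lambda>_. nonzero))
        + measure M (\<Union>a\<in>{..L}. taboo_event (a + L) (zero_only_at a))"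
      by (rule measure_subadditive) (auto simp: emeasure_finite)
    also have "measure M (\<Union>a\<in>{..L}. taboo_event (a + L) (zero_only_at a))
        \<le> (\<Sum>a\<le>L. measure M (taboo_event (a + L) (zero_only_at a)))"
      by (rule finite_measure_subadditive_finite) auto
    also have "\<dots> \<le> (\<Sum>a\<le>L. (1 - \<eta>) ^ ((L - 1) div N) * measure M (taboo_event a (first_zero_at a)))"
      by (intro sum_mono measure_no_return L1)
    also have "\<dots> = (1 - \<eta>) ^ m * (\<Sum>a\<le>L. measure M (taboo_event a (first_zero_at a)))"
      by (simp only: LN(1) sum_distrib_left)
    also have "\<dots> \<le> (1 - \<eta>) ^ m * 1" using q by (intro mult_left_mono sum_first_zero_at_le_1) auto
    also have "measure M (taboo_event L (\<lambda>_. nonzero)) \<le> (1 - \<eta>) ^ m"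
      using measure_never_zero[of L] power_decreasing[OF LN(2) q] by linarith
    finally show ?thesis by simp
  qed
  show ?thesis
  proof (rule ccontr)
    assume "measure M at_most_one_zero \<noteq> 0"
    then have pos: "0 < measure M at_most_one_zero" using measure_nonneg[of M at_most_one_zero] by linarith
    have "(\<lambda>m. (1 - \<eta>) ^ m) \<longlonglongrightarrow> 0" by (rule LIMSEQ_power_zero) (use eta in auto)
    then have "eventually (\<lambda>m. (1 - \<eta>) ^ m < measure M at_most_one_zero / 2) sequentially"
      using pos by (intro order_tendstoD(2)) auto
    then obtain m where "(1 - \<eta>) ^ m < measure M at_most_one_zero / 2"
      by (auto simp: eventually_sequentially)
    with bound[of m] show False by simp
  qed
qed

lemma measure_zeros_at_le: "measure M (taboo_event (a + Suc l) (zeros_at a (Suc l)))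
    \<le> (1 - \<eta>) ^ ((l - 1) div N) * measure M (taboo_event a (first_zero_at a))"
proof (cases l)
  case 0
  have "taboo_event (a + Suc l) (zeros_at a (Suc l)) \<subseteq> taboo_event a (first_zero_at a)"
  proof
    fix \<omega> assume "\<omega> \<in> taboo_event (a + Suc l) (zeros_at a (Suc l))"
    then have h: "\<omega> \<in> space M" "\<And>k. k \<le> a + Suc l \<Longrightarrow> J k \<omega> \<in> zeros_at a (Suc l) k"
      by (auto simp: taboo_event_def)
    show "\<omega> \<in> taboo_event a (first_zero_at a)" unfolding taboo_event_def
    proof (intro CollectI conjI allI impI h(1))
      fix k assume "k \<le> a" then show "J k \<omega> \<in> first_zero_at a k" using h(2)[of k]
        by (auto simp: zeros_at_def first_zero_at_def)
    qed
  qed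
  then have "measure M (taboo_event (a + Suc l) (zeros_at a (Suc l)))
      \<le> measure M (taboo_event a (first_zero_at a))"
    by (intro finite_measure_mono) auto
  then show ?thesis using 0 by simp
next
  case (Suc l')
  have "taboo_event (a + Suc l) (zeros_at a (Suc l)) \<subseteq> taboo_event (a + l) (zero_only_at a)"
  proof
    fix \<omega> assume "\<omega> \<in> taboo_event (a + Suc l) (zeros_at a (Suc l))"
    then have h: "\<omega> \<in> space M" "\<And>k. k \<le> a + Suc l \<Longrightarrow> J k \<omega> \<in> zeros_at a (Suc l) k"
      by (auto simp: taboo_event_def)
    show "\<omega> \<in> taboo_event (a + l) (zero_only_at a)"
      unfolding taboo_event_def
    proof (intro CollectI conjI allI impI h(1))
      fix k assume "k \<le> a + l" then show "J k \<omega> \<in> zero_only_at a k"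
        using h(2)[of k] by (auto simp: zeros_at_def zero_only_at_def split: if_splits)
    qed
  qed
  then have "measure M (taboo_event (a + Suc l) (zeros_at a (Suc l)))
      \<le> measure M (taboo_event (a + l) (zero_only_at a))"
    by (intro finite_measure_mono) auto
  also have "\<dots> \<le> (1 - \<eta>) ^ ((l - 1) div N) * measure M (taboo_event a (first_zero_at a))"
    by (rule measure_no_return) (use Suc in auto)
  finally show ?thesis .
qed

lemma measure_first_zero_at_le: "measure M (taboo_event a (first_zero_at a)) \<le> (1 - \<eta>) ^ ((a - 1) div N)"
proof (cases a)
  case 0 then show ?thesis by simp
next
  case (Suc a')
  have "taboo_event a (first_zero_at a) \<subseteq> taboo_event a' (\<lambda>_. nonzero)"
    unfolding taboo_event_def first_zero_at_def Suc by auto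
  then have "measure M (taboo_event a (first_zero_at a)) \<le> measure M (taboo_event a' (\<lambda>_. nonzero))"
    by (intro finite_measure_mono) auto
  also have "\<dots> \<le> (1 - \<eta>) ^ (a' div N)" by (rule measure_never_zero)
  finally show ?thesis using Suc by simp
qed

lemma tail_DeltaB1_le_suminf:
  fixes g :: "nat \<Rightarrow> real"
  assumes g0: "\<And>l. 0 \<le> g l" and sg: "summable (\<lambda>l. (1 - \<eta>) ^ ((l - 1) div N) * g l)"
    and hyp: "\<And>a l. measure M (taboo_event (a + Suc l) (zeros_at a (Suc l))
                       \<inter> {\<omega>\<in>space M. x < (\<Sum>i\<in>{Suc a..a + Suc l}. X i \<omega>)})
               \<le> measure M (taboo_event (a + Suc l) (zeros_at a (Suc l))) * g l"
  shows "measure M {\<omega>\<in>space M. x < DeltaB X J 1 \<omega>} \<le> (\<Sum>l. (1 - \<eta>) ^ ((l - 1) div N) * g l)"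
proof -
  define th where "th l = (1 - \<eta>) ^ ((l - 1) div N) * g l" for l
  define \<pi> where "\<pi> a = measure M (taboo_event a (first_zero_at a))" for a
  define V where "V a l = taboo_event (a + Suc l) (zeros_at a (Suc l))
                            \<inter> {\<omega>\<in>space M. x < (\<Sum>i\<in>{Suc a..a + Suc l}. X i \<omega>)}" for a l
  have [measurable]: "V a l \<in> sets M" for a l unfolding V_def by measurable
  have sth: "summable th" using sg unfolding th_def .
  have V_le: "measure M (V a l) \<le> \<pi> a * th l" for a l
  proof -
    have "measure M (V a l) \<le> measure M (taboo_event (a + Suc l) (zeros_at a (Suc l))) * g l"
      unfolding V_def by (rule hyp)
    also have "\<dots> \<le> ((1 - \<eta>) ^ ((l - 1) div N) * \<pi> a) * g l"
      unfolding \<pi>_def by (intro mult_right_mono measure_zeros_at_le g0)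
    finally show ?thesis unfolding th_def by (simp add: mult_ac)
  qed
  have "measure M (\<Union>l. V a l) \<le> (\<Sum>l. \<pi> a * th l)" for a
    by (rule measure_le_suminf_cover[where N="{}"]) (auto intro: V_le summable_mult sth)
  then have UV_le: "measure M (\<Union>l. V a l) \<le> \<pi> a * (\<Sum>l. th l)" for a
    using suminf_mult[OF sth] by metis
  have "measure M {\<omega>\<in>space M. x < DeltaB X J 1 \<omega>} \<le> (\<Sum>a. \<pi> a * (\<Sum>l. th l))"
    using DeltaB1_cover[of x] measure_at_most_one_zero UV_le summable_first_zero_at
    unfolding V_def[symmetric] \<pi>_def[symmetric]
    by (intro measure_le_suminf_cover[where N=at_most_one_zero] summable_mult2) auto
  also have "\<dots> = (\<Sum>a. \<pi> a) * (\<Sum>l. th l)"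
    unfolding \<pi>_def by (rule suminf_mult2[OF summable_first_zero_at, symmetric])
  also have "\<dots> \<le> 1 * (\<Sum>l. th l)"
    using suminf_first_zero_at_le_1 suminf_nonneg[OF sth] eta g0
    unfolding \<pi>_def th_def by (intro mult_right_mono) auto
  finally show ?thesis unfolding th_def by simp
qed

lemma tail_DeltaB0_le_suminf:
  fixes g :: "nat \<Rightarrow> real"
  assumes g0: "\<And>l. 0 \<le> g l" and sg: "summable (\<lambda>a. (1 - \<eta>) ^ ((a - 1) div N) * g a)"
    and hyp: "\<And>a. measure M (taboo_event a (first_zero_at a) \<inter> {\<omega>\<in>space M. x < (\<Sum>i\<in>{0..a}. X i \<omega>)})
               \<le> measure M (taboo_event a (first_zero_at a)) * g a"
  shows "measure M {\<omega>\<in>space M. x < DeltaB X J 0 \<omega>} \<le> (\<Sum>a. (1 - \<eta>) ^ ((a - 1) div N) * g a)"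
proof (rule measure_le_suminf_cover[OF DeltaB0_cover _ measure_at_most_one_zero _ _ sg])
  show "measure M (taboo_event a (first_zero_at a) \<inter> {\<omega>\<in>space M. x < (\<Sum>i\<in>{0..a}. X i \<omega>)})
          \<le> (1 - \<eta>) ^ ((a - 1) div N) * g a" for a
    using hyp[of a] mult_right_mono[OF measure_first_zero_at_le g0, of a a] by linarith
qed auto

end

section \<open>Tails of the increments between visits to state 0\<close>

locale MAP_subexp = MAP_recurrent M d \<beta> H X J N \<eta> + F: subexp_distribution F
  for M :: "'a measure" and d \<beta> H X J N \<eta> F +
  assumes eta_lt_1: "\<eta> < 1"
begin

definition dominated :: "real \<Rightarrow> nat \<Rightarrow> real \<Rightarrow> bool" where
  "dominated B k x0 \<longleftrightarrow> (\<forall>i<d. \<forall>t. measure (\<beta> i) {t<..} \<le> thin_tail F B k (t - x0) * measure (\<beta> i) UNIV)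
      \<and> (\<forall>i<d. \<forall>j<d. \<forall>t. measure (H i j) {t<..} \<le> thin_tail F B k (t - x0) * measure (H i j) UNIV)"

lemma tail_excursion_sum_le:
  fixes x x0 :: real
  assumes dk: "dominated B k x0" and B: "0 \<le> B" "B \<le> 1"
  shows "measure M (taboo_event (a + Suc l) (zeros_at a (Suc l))
           \<inter> {\<omega>\<in>space M. x < (\<Sum>i\<in>{Suc a..a + Suc l}. X i \<omega>)})
          \<le> measure M (taboo_event (a + Suc l) (zeros_at a (Suc l))) * thin_tail F B (k * Suc l)
            (x - real (Suc l) * x0)"
proof -
  have "measure M (taboo_event (a + Suc l) (zeros_at a (Suc l))
          \<inter> {\<omega>\<in>space M. x < (\<Sum>i\<in>{Suc a..a + Suc l}. X i \<omega>)})
      \<le> measure M (taboo_event (a + Suc l) (zeros_at a (Suc l)))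
          * thin_tail F B (k * (a + Suc l - Suc a + 1)) (x - real (a + Suc l - Suc a + 1) * x0)"
  proof (rule taboo_event_sum_tail_le[OF F.nonneg_distribution_axioms B])
    fix p i t assume p: "p \<in> taboo_paths (a + Suc l) (zeros_at a (Suc l))" and i: "i \<in> {Suc a..a + Suc l}"
    have "step_law \<beta> H p i = H (p (i - 1)) (p i)" using i by (simp add: step_law_def)
    moreover have "p (i - 1) < d" "p i < d" using taboo_paths_lt[OF p] i by auto
    ultimately show "measure (step_law \<beta> H p i) {t<..}
        \<le> thin_tail F B k (t - x0) * measure (step_law \<beta> H p i) UNIV"
      using dk unfolding dominated_def by auto
  qed simp
  then show ?thesis by simp
qed

lemma tail_initial_sum_le:
  fixes x x0 :: real
  assumes dk: "dominated B k x0" and B: "0 \<le> B" "B \<le> 1"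
  shows "measure M (taboo_event a (first_zero_at a) \<inter> {\<omega>\<in>space M. x < (\<Sum>i\<in>{0..a}. X i \<omega>)})
          \<le> measure M (taboo_event a (first_zero_at a)) * thin_tail F B (k * Suc a) (x - real (Suc a) * x0)"
proof -
  have "measure M (taboo_event a (first_zero_at a) \<inter> {\<omega>\<in>space M. x < (\<Sum>i\<in>{0..a}. X i \<omega>)})
      \<le> measure M (taboo_event a (first_zero_at a)) * thin_tail F B (k * (a - 0 + 1))
        (x - real (a - 0 + 1) * x0)"
  proof (rule taboo_event_sum_tail_le[OF F.nonneg_distribution_axioms B])
    fix p i t assume p: "p \<in> taboo_paths a (first_zero_at a)" and i: "i \<in> {0..a}"
    show "measure (step_law \<beta> H p i) {t<..} \<le> thin_tail F B k (t - x0) * measure (step_law \<beta> H p i) UNIV"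
    proof (cases "i = 0")
      case True
      have "p 0 < d" using taboo_paths_lt[OF p] by auto
      then show ?thesis using True dk unfolding dominated_def step_law_def by auto
    next
      case False
      have "step_law \<beta> H p i = H (p (i - 1)) (p i)" using False by (simp add: step_law_def)
      moreover have "p (i - 1) < d" "p i < d" using taboo_paths_lt[OF p] i by auto
      ultimately show ?thesis using dk unfolding dominated_def by auto
    qed
  qed simp
  then show ?thesis by simp
qed

text \<open>The choice of \<open>e\<close> makes the geometric decay of long excursions away from state \<open>0\<close>
  dominate the exponential growth in Kesten's bound.\<close>
lemma weighted_thin_tail_le_geometric:
  assumes x0: "0 \<le> x0" and B: "0 \<le> B" "B \<le> 1"
  obtains A r where "0 \<le> A" "0 \<le> r" "r < 1"
    "\<And>x l. (1 - \<eta>) ^ ((l - 1) div N) * thin_tail F B (k * Suc l) (x - real (Suc l) * x0)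
        \<le> A * r ^ l * tail F x"
proof -
  define q where "q = 1 - \<eta>"
  have q: "0 < q" "q < 1" "q \<le> 1" using eta eta_lt_1 unfolding q_def by auto
  define Q where "Q = root N q"
  have Q: "0 < Q" "Q < 1" unfolding Q_def using q N1 real_root_less_iff[of N q 1]
    by (auto simp: real_root_gt_zero)
  obtain e where e: "0 < e" "Q * (1 + e) ^ (2 * k + 1) < 1" using exists_small_growth[OF Q] by blast
  obtain x1 where x1: "0 \<le> x1" "\<And>x. x1 \<le> x \<Longrightarrow> (\<integral>y. tail F (x - y) \<partial>F) \<le> (2 + e) * tail F x"
    using F.convolution_tail_le_from[OF e(1)] by blast
  define Kc where "Kc = 1 + (1 / tail F x1) / e"
  have Kc: "0 \<le> Kc" unfolding Kc_def using F.tail_pos[of x1] e by simp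
  obtain x2 where x2: "\<And>x. x2 \<le> x \<Longrightarrow> tail F (x - x0) \<le> (1 + e) * tail F x"
    using F.eventually_tail_shift_le[OF x0 e(1)] unfolding eventually_at_top_linorder by blast
  define K1 where "K1 = 1 / tail F x2"
  have K1: "0 \<le> K1" unfolding K1_def using F.tail_pos[of x2] by simp
  define \<rho> where "\<rho> = (1 + e) ^ (2 * k + 1)"
  have \<rho>: "1 \<le> \<rho>" unfolding \<rho>_def using e by (intro one_le_power) auto
  show ?thesis
  proof (rule that[of "Kc * K1 * \<rho> / q" "Q * \<rho>"])
    show "0 \<le> Kc * K1 * \<rho> / q" using Kc K1 \<rho> q by simp
    show "0 \<le> Q * \<rho>" using Q \<rho> by simp
    show "Q * \<rho> < 1" using e(2) unfolding \<rho>_def .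
    fix x l
    have th: "q ^ ((l - 1) div N) \<le> Q ^ l / q" unfolding Q_def
      by (rule power_div_le_root_power[OF q(1,3) N1])
    have "thin_tail F B (k * Suc l) (x - real (Suc l) * x0)
        \<le> Kc * (1 + e) ^ (2 * (k * Suc l)) * tail F (x - real (Suc l) * x0)"
      unfolding Kc_def by (rule F.thin_tail_le_exp[OF B e(1) x1])
    also have "\<dots> \<le> Kc * (1 + e) ^ (2 * (k * Suc l)) * (K1 * (1 + e) ^ Suc l * tail F x)"
      unfolding K1_def using Kc e
      by (intro mult_left_mono F.tail_shift_mult_le[OF x0 _ x2]) auto
    also have "\<dots> = Kc * K1 * \<rho> ^ Suc l * tail F x"
    proof -
      have ex: "2 * (k * Suc l) + Suc l = (2 * k + 1) * Suc l" by (simp add: algebra_simps)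
      have pw: "(1 + e) ^ (2 * (k * Suc l)) * (1 + e) ^ Suc l = \<rho> ^ Suc l"
        unfolding \<rho>_def by (simp only: power_add[symmetric] power_mult[symmetric] ex)
      show ?thesis unfolding pw[symmetric] by (simp add: mult_ac)
    qed
    finally have g: "thin_tail F B (k * Suc l) (x - real (Suc l) * x0) \<le> Kc * K1 * \<rho> ^ Suc l * tail F x" .
    have "q ^ ((l - 1) div N) * thin_tail F B (k * Suc l) (x - real (Suc l) * x0)
        \<le> (Q ^ l / q) * (Kc * K1 * \<rho> ^ Suc l * tail F x)"
      using th g q Q by (intro mult_mono F.thin_tail_nonneg B) auto
    also have "\<dots> = Kc * K1 * \<rho> / q * (Q * \<rho>) ^ l * tail F x"
      by (simp add: power_mult_distrib algebra_simps)
    finally show "(1 - \<eta>) ^ ((l - 1) div N) * thin_tail F B (k * Suc l) (x - real (Suc l) * x0)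
        \<le> Kc * K1 * \<rho> / q * (Q * \<rho>) ^ l * tail F x"
      unfolding q_def .
  qed
qed

lemma tail_DeltaB_le_suminf:
  fixes g :: "nat \<Rightarrow> real"
  assumes g0: "\<And>l. 0 \<le> g l" and sg: "summable (\<lambda>l. (1 - \<eta>) ^ ((l - 1) div N) * g l)"
    and h1: "\<And>a l. measure M (taboo_event (a + Suc l) (zeros_at a (Suc l))
                       \<inter> {\<omega>\<in>space M. x < (\<Sum>i\<in>{Suc a..a + Suc l}. X i \<omega>)})
               \<le> measure M (taboo_event (a + Suc l) (zeros_at a (Suc l))) * g l"
    and h0: "\<And>a. measure M (taboo_event a (first_zero_at a) \<inter> {\<omega>\<in>space M. x < (\<Sum>i\<in>{0..a}. X i \<omega>)})
               \<le> measure M (taboo_event a (first_zero_at a)) * g a"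
    and m: "m \<in> {0, 1}"
  shows "measure M {\<omega>\<in>space M. x < DeltaB X J m \<omega>} \<le> (\<Sum>l. (1 - \<eta>) ^ ((l - 1) div N) * g l)"
  using m tail_DeltaB1_le_suminf[OF g0 sg h1] tail_DeltaB0_le_suminf[OF g0 sg h0] by auto

lemma tail_DeltaB_le_const:
  assumes dk: "dominated 1 k x0" and x0: "0 \<le> x0"
  obtains Cst where "0 \<le> Cst"
    "\<And>x m. m \<in> {0, 1} \<Longrightarrow> measure M {\<omega>\<in>space M. x < DeltaB X J m \<omega>} \<le> Cst * tail F x"
proof -
  obtain A r where Ar: "0 \<le> A" "0 \<le> r" "r < 1"
    "\<And>x l. (1 - \<eta>) ^ ((l - 1) div N) * thin_tail F 1 (k * Suc l) (x - real (Suc l) * x0)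
        \<le> A * r ^ l * tail F x"
    using weighted_thin_tail_le_geometric[OF x0, of 1 k] by auto
  show ?thesis
  proof (rule that[of "A / (1 - r)"])
    show "0 \<le> A / (1 - r)" using Ar by simp
    fix x :: real and m :: nat assume m: "m \<in> {0, 1}"
    define f where "f l = (1 - \<eta>) ^ ((l - 1) div N) * thin_tail F 1 (k * Suc l) (x - real (Suc l) * x0)" for l
    have f0: "0 \<le> f l" for l unfolding f_def using eta by (simp add: F.thin_tail_nonneg)
    have fb: "f l \<le> (A * tail F x) * r ^ l" for l
    proof -
      have "f l \<le> A * r ^ l * tail F x" unfolding f_def by (rule Ar(4))
      then show ?thesis by (simp add: mult_ac)
    qed
    have "measure M {\<omega>\<in>space M. x < DeltaB X J m \<omega>} \<le> (\<Sum>l. f l)"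
      unfolding f_def
      by (rule tail_DeltaB_le_suminf[OF _ _ tail_excursion_sum_le[OF dk] tail_initial_sum_le[OF dk] m])
        (use geometric_majorant(1)[OF f0 fb Ar(2,3)] in \<open>simp_all add: F.thin_tail_nonneg f_def\<close>)
    also have "\<dots> \<le> A / (1 - r) * tail F x"
      using geometric_majorant(2)[OF f0 fb Ar(2,3)] by simp
    finally show "measure M {\<omega>\<in>space M. x < DeltaB X J m \<omega>} \<le> A / (1 - r) * tail F x" .
  qed
qed

lemma tail_DeltaB_le_two_dominations:
  fixes x x0 x0' :: real
  assumes dk: "dominated 1 k x0"
    and Ar: "0 \<le> A" "0 \<le> r" "r < 1"
      "\<And>x l. (1 - \<eta>) ^ ((l - 1) div N) * thin_tail F 1 (k * Suc l) (x - real (Suc l) * x0)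
        \<le> A * r ^ l * tail F x"
    and x1: "0 \<le> x1" "\<And>x. x1 \<le> x \<Longrightarrow> (\<integral>y. tail F (x - y) \<partial>F) \<le> (2 + 1) * tail F x"
    and B': "0 \<le> x0'" "0 \<le> B'" "B' \<le> 1" "dominated B' 1 x0'"
    and x: "tail F (x - L * x0') \<le> 2 * tail F x" "L * x0' \<le> x" and m: "m \<in> {0, 1}"
  shows "measure M {\<omega>\<in>space M. x < DeltaB X J m \<omega>}
           \<le> (A * tail F x) * r ^ L / (1 - r) + L * (B' * L * 2 ^ L * (2 * tail F x) / tail F x1)"
proof -
  define th where "th l = (1 - \<eta>) ^ ((l - 1) div N)" for l :: nat
  define gc where "gc l = thin_tail F 1 (k * Suc l) (x - real (Suc l) * x0)" for l
  define gf where "gf l = thin_tail F B' (1 * Suc l) (x - real (Suc l) * x0')" for l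
  have th: "0 \<le> th l" "th l \<le> 1" for l unfolding th_def using eta by (auto intro: power_le_one)
  have gc0: "0 \<le> gc l" and gf0: "0 \<le> gf l" for l
    unfolding gc_def gf_def using B' by (auto intro: F.thin_tail_nonneg)
  have fb: "th l * gc l \<le> (A * tail F x) * r ^ l" for l
  proof -
    have "th l * gc l \<le> A * r ^ l * tail F x" unfolding th_def gc_def by (rule Ar(4))
    then show ?thesis by (simp add: mult_ac)
  qed
  have gb: "th l * gf l \<le> B' * L * 2 ^ L * (2 * tail F x) / tail F x1" if "l < L" for l
  proof -
    have "th l * gf l \<le> gf l" using th gf0 by (simp add: mult_left_le_one_le)
    also have "\<dots> \<le> (1 / tail F x1) * B' * L * (1 + 1) ^ L * tail F (x - L * x0')"
      unfolding gf_def using F.thin_tail_shifted_le[OF _ x1 B'(2,3,1) that x(2)] by simp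
    also have "\<dots> \<le> B' * L * 2 ^ L * (2 * tail F x) / tail F x1"
      using mult_left_mono[OF x(1), of "B' * L * 2 ^ L / tail F x1"] B' F.tail_pos[of x1] by simp
    finally show ?thesis .
  qed
  have "measure M {\<omega>\<in>space M. x < DeltaB X J m \<omega>} \<le> (\<Sum>l. th l * min (gc l) (gf l))"
    unfolding th_def
  proof (rule tail_DeltaB_le_suminf[OF _ _ _ _ m])
    show "summable (\<lambda>l. (1 - \<eta>) ^ ((l - 1) div N) * min (gc l) (gf l))"
      using geometric_majorant(1)[of "\<lambda>l. th l * min (gc l) (gf l)" "A * tail F x" r] th gc0 gf0 fb Ar(2,3)
      by (simp add: th_def min_mult_distrib_left min.coboundedI1)
    show "measure M (taboo_event (a + Suc l) (zeros_at a (Suc l))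
            \<inter> {\<omega>\<in>space M. x < (\<Sum>i\<in>{Suc a..a + Suc l}. X i \<omega>)})
          \<le> measure M (taboo_event (a + Suc l) (zeros_at a (Suc l))) * min (gc l) (gf l)" for a l
      using tail_excursion_sum_le[OF dk, of a l x] tail_excursion_sum_le[OF B'(4), of a l x] B'
      unfolding gc_def gf_def by (simp add: min_mult_distrib_left)
    show "measure M (taboo_event a (first_zero_at a) \<inter> {\<omega>\<in>space M. x < (\<Sum>i\<in>{0..a}. X i \<omega>)})
          \<le> measure M (taboo_event a (first_zero_at a)) * min (gc a) (gf a)" for a
      using tail_initial_sum_le[OF dk, of a x] tail_initial_sum_le[OF B'(4), of a x] B'
      unfolding gc_def gf_def by (simp add: min_mult_distrib_left)
  qed (use gc0 gf0 in auto)
  also have "\<dots> = (\<Sum>l. min (th l * gc l) (th l * gf l))"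
    using th by (simp add: min_mult_distrib_left)
  also have "\<dots> \<le> (A * tail F x) * r ^ L / (1 - r) + L * (B' * L * 2 ^ L * (2 * tail F x) / tail F x1)"
    using th gc0 gf0 by (intro suminf_min_le_split[OF _ _ fb Ar(2,3) gb]) auto
  finally show ?thesis .
qed

text \<open>The series bounding the tail of \<open>\<Delta>B\<^sub>m\<close> is split at a large index \<open>L\<close>: beyond \<open>L\<close> the
  crude domination makes it geometrically small, and below \<open>L\<close> a domination with a small thinning
  probability makes every term small.\<close>
lemma tail_DeltaB_eventually_le:
  assumes dk: "dominated 1 k x0" and x0: "0 \<le> x0"
    and small: "\<And>\<delta>. 0 < \<delta> \<Longrightarrow> \<exists>B x0'. 0 \<le> x0' \<and> 0 \<le> B \<and> B \<le> \<delta> \<and> B \<le> 1 \<and> dominated B 1 x0'"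
    and \<epsilon>: "0 < \<epsilon>"
  shows "eventually (\<lambda>x. \<forall>m\<in>{0, 1}. measure M {\<omega>\<in>space M. x < DeltaB X J m \<omega>} \<le> \<epsilon> * tail F x) at_top"
proof -
  obtain A r where Ar: "0 \<le> A" "0 \<le> r" "r < 1"
    "\<And>x l. (1 - \<eta>) ^ ((l - 1) div N) * thin_tail F 1 (k * Suc l) (x - real (Suc l) * x0)
        \<le> A * r ^ l * tail F x"
    using weighted_thin_tail_le_geometric[OF x0, of 1 k] by auto
  have "(\<lambda>L. A * r ^ L / (1 - r)) \<longlonglongrightarrow> A * 0 / (1 - r)"
    using Ar by (intro tendsto_intros LIMSEQ_power_zero) auto
  then have "eventually (\<lambda>L. A * r ^ L / (1 - r) < \<epsilon> / 2) sequentially"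
    using \<epsilon> by (intro order_tendstoD(2)) auto
  then obtain L where L: "A * r ^ L / (1 - r) < \<epsilon> / 2"
    by (auto simp: eventually_sequentially)
  obtain x1 where x1: "0 \<le> x1" "\<And>x. x1 \<le> x \<Longrightarrow> (\<integral>y. tail F (x - y) \<partial>F) \<le> (2 + 1) * tail F x"
    using F.convolution_tail_le_from[of 1] by auto
  define \<delta> where "\<delta> = \<epsilon> * tail F x1 / (4 * (real L + 1) ^ 2 * 2 ^ L)"
  have \<delta>: "0 < \<delta>" unfolding \<delta>_def using \<epsilon> F.tail_pos[of x1] by simp
  obtain B' x0' where B': "0 \<le> x0'" "0 \<le> B'" "B' \<le> \<delta>" "B' \<le> 1" "dominated B' 1 x0'"
    using small[OF \<delta>] by blast
  have "eventually (\<lambda>x. tail F (x - real L * x0') \<le> 2 * tail F x) at_top"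
    using F.eventually_tail_shift_le[of "real L * x0'" 1] B' by simp
  then show ?thesis
    using eventually_ge_at_top[of "real L * x0'"]
  proof eventually_elim
    case (elim x)
    have "(A * tail F x) * r ^ L / (1 - r) = (A * r ^ L / (1 - r)) * tail F x" by simp
    also have "\<dots> \<le> \<epsilon> / 2 * tail F x" using L F.tail_nonneg[of x] by (intro mult_right_mono) auto
    finally have crude: "(A * tail F x) * r ^ L / (1 - r) \<le> \<epsilon> / 2 * tail F x" .
    have fine: "L * (B' * L * 2 ^ L * (2 * tail F x) / tail F x1) \<le> \<epsilon> / 2 * tail F x"
    proof -
      have "L * (B' * L * 2 ^ L * (2 * tail F x) / tail F x1)
          = 2 * B' * (real L) ^ 2 * 2 ^ L * tail F x / tail F x1"
        by (simp add: power2_eq_square)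
      also have "\<dots> \<le> 2 * \<delta> * (real L + 1) ^ 2 * 2 ^ L * tail F x / tail F x1"
        using B' F.tail_nonneg[of x] F.tail_pos[of x1]
        by (intro divide_right_mono mult_right_mono mult_mono mult_left_mono power_mono) auto
      also have "\<dots> = \<epsilon> / 2 * tail F x" unfolding \<delta>_def using F.tail_pos[of x1] by (simp add: field_simps)
      finally show ?thesis .
    qed
    show ?case
    proof
      fix m :: nat assume m: "m \<in> {0, 1}"
      have "measure M {\<omega>\<in>space M. x < DeltaB X J m \<omega>}
          \<le> (A * tail F x) * r ^ L / (1 - r) + L * (B' * L * 2 ^ L * (2 * tail F x) / tail F x1)"
        by (rule tail_DeltaB_le_two_dominations[OF dk Ar x1 B'(1,2,4,5) elim m])
      then show "measure M {\<omega>\<in>space M. x < DeltaB X J m \<omega>} \<le> \<epsilon> * tail F x"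
        using crude fine by linarith
    qed
  qed
qed

definition kernel_tails_le :: "real \<Rightarrow> real \<Rightarrow> bool" where
  "kernel_tails_le b x1 \<longleftrightarrow> (\<forall>t\<ge>x1. (\<forall>i<d. measure (\<beta> i) {t<..} \<le> b * tail F t)
      \<and> (\<forall>i<d. \<forall>j<d. measure (H i j) {t<..} \<le> b * tail F t))"

lemma exists_kernel_tails_le:
  assumes "\<forall>i<d. Limsup at_top (\<lambda>x. ereal (measure (\<beta> i) {x<..} / measure F {x<..})) \<le> ereal a"
    and "\<forall>i<d. \<forall>j<d. Limsup at_top (\<lambda>x. ereal (measure (H i j) {x<..} / measure F {x<..})) \<le> ereal a"
    and "0 < \<delta>"
  shows "\<exists>x1. kernel_tails_le (a + \<delta>) x1"
proof -
  have "eventually (\<lambda>t. (\<forall>i\<in>{..<d}. measure (\<beta> i) {t<..} \<le> (a + \<delta>) * tail F t)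
      \<and> (\<forall>ij\<in>{..<d} \<times> {..<d}. measure (H (fst ij) (snd ij)) {t<..} \<le> (a + \<delta>) * tail F t)) at_top"
  proof (intro eventually_conj eventually_ball_finite ballI)
    show "eventually (\<lambda>t. measure (\<beta> i) {t<..} \<le> (a + \<delta>) * tail F t) at_top" if "i \<in> {..<d}" for i
      using that assms(1,3) by (intro F.eventually_le_of_Limsup) auto
    show "eventually (\<lambda>t. measure (H (fst ij) (snd ij)) {t<..} \<le> (a + \<delta>) * tail F t) at_top"
      if "ij \<in> {..<d} \<times> {..<d}" for ij
      using that assms(2,3) by (intro F.eventually_le_of_Limsup) auto
  qed auto
  then obtain x1 where "\<And>t. x1 \<le> t \<Longrightarrow> (\<forall>i\<in>{..<d}. measure (\<beta> i) {t<..} \<le> (a + \<delta>) * tail F t)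
      \<and> (\<forall>ij\<in>{..<d} \<times> {..<d}. measure (H (fst ij) (snd ij)) {t<..} \<le> (a + \<delta>) * tail F t)"
    unfolding eventually_at_top_linorder by blast
  then show ?thesis by (intro exI[of _ x1]) (auto simp: kernel_tails_le_def)
qed

text \<open>Kernels with zero mass are dominated trivially, so a tail bound only has to be scaled by
  the smallest positive mass.\<close>
lemma exists_min_pos_mass:
  obtains m where "0 < m"
    "\<And>i. i < d \<Longrightarrow> measure (\<beta> i) UNIV = 0 \<or> m \<le> measure (\<beta> i) UNIV"
    "\<And>i j. i < d \<Longrightarrow> j < d \<Longrightarrow> measure (H i j) UNIV = 0 \<or> m \<le> measure (H i j) UNIV"
proof -
  define S where "S = (\<lambda>i. measure (\<beta> i) UNIV) ` {..<d}
      \<union> (\<lambda>(i, j). measure (H i j) UNIV) ` ({..<d} \<times> {..<d})"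
  have "finite S" unfolding S_def by auto
  then obtain m where m: "0 < m" "\<And>x. x \<in> S \<Longrightarrow> 0 < x \<Longrightarrow> m \<le> x"
    by (rule finite_pos_lower_bound) blast
  show ?thesis
  proof (rule that[OF m(1)])
    show "measure (\<beta> i) UNIV = 0 \<or> m \<le> measure (\<beta> i) UNIV" if "i < d" for i
    proof -
      have mem: "measure (\<beta> i) UNIV \<in> S" unfolding S_def using that by auto
      show ?thesis
        using m(2)[OF mem] measure_nonneg[of "\<beta> i" UNIV]
        by (cases "measure (\<beta> i) UNIV = 0") (auto simp: less_le)
    qed
    show "measure (H i j) UNIV = 0 \<or> m \<le> measure (H i j) UNIV" if "i < d" "j < d" for i j
    proof -
      have mem: "measure (H i j) UNIV \<in> S" unfolding S_def using that by force
      show ?thesis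
        using m(2)[OF mem] measure_nonneg[of "H i j" UNIV]
        by (cases "measure (H i j) UNIV = 0") (auto simp: less_le)
    qed
  qed
qed

lemma dominated_if_kernel_tails_le:
  assumes m: "0 < m"
      "\<And>i. i < d \<Longrightarrow> measure (\<beta> i) UNIV = 0 \<or> m \<le> measure (\<beta> i) UNIV"
      "\<And>i j. i < d \<Longrightarrow> j < d \<Longrightarrow> measure (H i j) UNIV = 0 \<or> m \<le> measure (H i j) UNIV"
    and b: "0 \<le> b" and tails: "kernel_tails_le b x1" and x0: "x1 \<le> x0" "0 \<le> x0" and B: "0 \<le> B" "B \<le> 1"
    and ph: "\<And>s. 0 \<le> s \<Longrightarrow> (b / m) * tail F (s + x0) \<le> thin_tail F B k s"
  shows "dominated B k x0"
  unfolding dominated_def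
proof (intro conjI allI impI)
  show "measure (\<beta> i) {t<..} \<le> thin_tail F B k (t - x0) * measure (\<beta> i) UNIV" if "i < d" for i t
    by (rule F.tail_le_thin_tail_shift[OF finite_measure_beta[OF that] sets_beta[OF that] m(1) m(2)[OF that]
          _ b x0 B ph]) (use tails that in \<open>auto simp: kernel_tails_le_def\<close>)
  show "measure (H i j) {t<..} \<le> thin_tail F B k (t - x0) * measure (H i j) UNIV" if "i < d" "j
      < d" for i j t
    by (rule F.tail_le_thin_tail_shift[OF finite_measure_H[OF that] sets_H[OF that] m(1) m(3)[OF that]
          _ b x0 B ph]) (use tails that in \<open>auto simp: kernel_tails_le_def\<close>)
qed

lemma exists_dominated_crude:
  assumes b: "0 \<le> b" and tails: "kernel_tails_le b x1"
  shows "\<exists>k x0. 0 \<le> x0 \<and> dominated 1 k x0"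
proof -
  obtain m where m: "0 < m"
      "\<And>i. i < d \<Longrightarrow> measure (\<beta> i) UNIV = 0 \<or> m \<le> measure (\<beta> i) UNIV"
      "\<And>i j. i < d \<Longrightarrow> j < d \<Longrightarrow> measure (H i j) UNIV = 0 \<or> m \<le> measure (H i j) UNIV"
    by (rule exists_min_pos_mass) blast
  have "0 \<le> b / m" using b m(1) by simp
  then obtain k s0 where ks: "1 \<le> k" "0 \<le> s0"
      "\<And>x0 s. s0 \<le> x0 \<Longrightarrow> 0 \<le> s \<Longrightarrow> (b / m) * tail F (s + x0) \<le> thin_tail F 1 k s"
    by (rule F.exists_thin_tail_dominating) blast
  have "dominated 1 k (max x1 s0)"
    by (rule dominated_if_kernel_tails_le[OF m b tails]) (use ks(2) ks(3)[OF max.cobounded2] in auto)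
  then show ?thesis using ks(2) by (intro exI[of _ k] exI[of _ "max x1 s0"]) auto
qed

lemma exists_dominated_small:
  assumes tails: "\<And>\<delta>. 0 < \<delta> \<Longrightarrow> \<exists>x1. kernel_tails_le \<delta> x1" and \<delta>: "0 < \<delta>"
  shows "\<exists>B x0. 0 \<le> x0 \<and> 0 \<le> B \<and> B \<le> \<delta> \<and> B \<le> 1 \<and> dominated B 1 x0"
proof -
  obtain m where m: "0 < m"
      "\<And>i. i < d \<Longrightarrow> measure (\<beta> i) UNIV = 0 \<or> m \<le> measure (\<beta> i) UNIV"
      "\<And>i j. i < d \<Longrightarrow> j < d \<Longrightarrow> measure (H i j) UNIV = 0 \<or> m \<le> measure (H i j) UNIV"
    by (rule exists_min_pos_mass) blast
  define B where "B = min \<delta> 1"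
  have B: "0 \<le> B" "B \<le> \<delta>" "B \<le> 1" unfolding B_def using \<delta> by auto
  obtain x1 where x1: "kernel_tails_le (m * B) x1"
    using tails[of "m * B"] m(1) \<delta> by (auto simp: B_def)
  have "(m * B / m) * tail F (s + max x1 0) \<le> thin_tail F B 1 s" if "0 \<le> s" for s
    using F.tail_shift_le_thin_tail_1[OF B(1,3) max.cobounded2 that] m(1) by simp
  then have "dominated B 1 (max x1 0)"
    using m(1) B by (intro dominated_if_kernel_tails_le[OF m _ x1]) auto
  then show ?thesis using B by (intro exI[of _ B] exI[of _ "max x1 0"]) auto
qed

lemma tail_DeltaB_bounded:
  assumes "0 \<le> b" "kernel_tails_le b x1"
  shows "\<exists>C. \<forall>x. \<forall>m\<in>{0, 1}. measure M {\<omega>\<in>space M. x < DeltaB X J m \<omega>} \<le> C * tail F x"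
proof -
  obtain k x0 where "0 \<le> x0" "dominated 1 k x0" using exists_dominated_crude[OF assms] by blast
  then obtain C where "\<And>x m. m \<in> {0, 1} \<Longrightarrow> measure M {\<omega>\<in>space M. x < DeltaB X J m \<omega>} \<le> C * tail F x"
    using tail_DeltaB_le_const by blast
  then show ?thesis by blast
qed

lemma tail_DeltaB_negligible:
  assumes tails: "\<And>\<delta>. 0 < \<delta> \<Longrightarrow> \<exists>x1. kernel_tails_le \<delta> x1" and \<epsilon>: "0 < \<epsilon>"
  shows "eventually (\<lambda>x. \<forall>m\<in>{0, 1}. measure M {\<omega>\<in>space M. x < DeltaB X J m \<omega>} \<le> \<epsilon> * tail F x) at_top"
proof -
  obtain x1 where "kernel_tails_le 1 x1" using tails[of 1] by auto
  then obtain k x0 where "0 \<le> x0" "dominated 1 k x0" using exists_dominated_crude[OF zero_le_one] by blast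
  then show ?thesis
    using exists_dominated_small[OF tails] \<epsilon> by (intro tail_DeltaB_eventually_le) auto
qed

lemma Limsup_tail_DeltaB_bounded:
  assumes "0 \<le> b" "kernel_tails_le b x1"
  shows "\<exists>C. \<forall>m\<in>{0, 1}.
           Limsup at_top (\<lambda>x. ereal (measure M {\<omega>\<in>space M. DeltaB X J m \<omega> > x} / measure F {x<..})) \<le> ereal C"
proof -
  obtain C where "\<And>x m. m \<in> {0, 1} \<Longrightarrow> measure M {\<omega>\<in>space M. x < DeltaB X J m \<omega>} \<le> C * tail F x"
    using tail_DeltaB_bounded[OF assms] by blast
  then show ?thesis by (intro exI[of _ C] ballI F.Limsup_le_of_eventually always_eventually) auto
qed

lemma Limsup_tail_DeltaB_le_0:
  assumes tails: "\<And>\<delta>. 0 < \<delta> \<Longrightarrow> \<exists>x1. kernel_tails_le \<delta> x1" and m: "m \<in> {0, 1}"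
  shows "Limsup at_top (\<lambda>x. ereal (measure M {\<omega>\<in>space M. DeltaB X J m \<omega> > x} / measure F {x<..})) \<le> 0"
proof (rule ereal_le_epsilon2)
  fix \<epsilon> :: real assume \<epsilon>: "0 < \<epsilon>"
  have "eventually (\<lambda>x. measure M {\<omega>\<in>space M. x < DeltaB X J m \<omega>} \<le> \<epsilon> * tail F x) at_top"
    by (rule eventually_mono[OF tail_DeltaB_negligible[OF tails \<epsilon>]]) (use m in auto)
  then show "Limsup at_top (\<lambda>x. ereal (measure M {\<omega>\<in>space M. DeltaB X J m \<omega> > x} / measure F {x<..}))
      \<le> 0 + ereal \<epsilon>"
    using F.Limsup_le_of_eventually by simp
qed

lemma exists_uniform_Limsup_bound:
  fixes c :: real and \<beta>t :: "nat \<Rightarrow> real" and Ht :: "nat \<Rightarrow> nat \<Rightarrow> real"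
  assumes c: "0 \<le> c" and bt: "\<forall>i<d. 0 \<le> \<beta>t i" and Ht: "\<forall>i<d. \<forall>j<d. 0 \<le> Ht i j"
    and tail_beta: "\<forall>i<d. Limsup at_top (\<lambda>x. ereal (measure (\<beta> i) {x<..} / measure F {x<..}))
        \<le> ereal (c * \<beta>t i)"
    and tail_H: "\<forall>i<d. \<forall>j<d.
                  Limsup at_top (\<lambda>x. ereal (measure (H i j) {x<..} / measure F {x<..})) \<le> ereal (c * Ht i j)"
  obtains K where "0 \<le> K"
    "\<forall>i<d. Limsup at_top (\<lambda>x. ereal (measure (\<beta> i) {x<..} / measure F {x<..})) \<le> ereal (c * K)"
    "\<forall>i<d. \<forall>j<d. Limsup at_top (\<lambda>x. ereal (measure (H i j) {x<..} / measure F {x<..})) \<le> ereal (c * K)"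
proof -
  define K where "K = (\<Sum>i<d. \<beta>t i) + (\<Sum>i<d. \<Sum>j<d. Ht i j)"
  have sums: "0 \<le> (\<Sum>i<d. \<beta>t i)" "0 \<le> (\<Sum>i<d. \<Sum>j<d. Ht i j)"
    using bt Ht by (auto intro!: sum_nonneg)
  have Kb: "\<beta>t i \<le> K" if "i < d" for i
    using that bt sums(2) unfolding K_def by (intro add_increasing2 member_le_sum) auto
  have KH: "Ht i j \<le> K" if "i < d" "j < d" for i j
  proof -
    have "Ht i j \<le> (\<Sum>j<d. Ht i j)" using that Ht by (intro member_le_sum) auto
    also have "\<dots> \<le> (\<Sum>i<d. \<Sum>j<d. Ht i j)" using that Ht by (intro member_le_sum[of i] sum_nonneg) auto
    finally show ?thesis unfolding K_def using sums(1) by simp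
  qed
  show ?thesis
  proof (rule that)
    show "0 \<le> K" using sums unfolding K_def by simp
    show "\<forall>i<d. Limsup at_top (\<lambda>x. ereal (measure (\<beta> i) {x<..} / measure F {x<..})) \<le> ereal (c * K)"
    proof (intro allI impI)
      fix i assume i: "i < d"
      have "ereal (c * \<beta>t i) \<le> ereal (c * K)" using Kb[OF i] c by (simp add: mult_left_mono)
      with tail_beta i show "Limsup at_top (\<lambda>x. ereal (measure (\<beta> i) {x<..} / measure F {x<..}))
          \<le> ereal (c * K)"
        by (blast intro: order.trans)
    qed
    show "\<forall>i<d. \<forall>j<d. Limsup at_top (\<lambda>x. ereal (measure (H i j) {x<..} / measure F {x<..})) \<le> ereal (c * K)"
    proof (intro allI impI)
      fix i j assume ij: "i < d" "j < d"
      have "ereal (c * Ht i j) \<le> ereal (c * K)" using KH[OF ij] c by (simp add: mult_left_mono)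
      with tail_H ij show "Limsup at_top (\<lambda>x. ereal (measure (H i j) {x<..} / measure F {x<..}))
          \<le> ereal (c * K)"
        by (blast intro: order.trans)
    qed
  qed
qed

end

lemma MAP_subexp_exists:
  assumes "1 \<le> d" and map: "MAP M d \<beta> H X J"
    and stoch: "stochastic_mat d (\<lambda>i j. measure (H i j) UNIV)"
    and irr: "irreducible_mat d (\<lambda>i j. measure (H i j) UNIV)"
    and Y: "subexponential F"
  obtains N \<eta> where "MAP_subexp M d \<beta> H X J N \<eta> F"
proof -
  interpret S: irreducible_stochastic d "\<lambda>i j. measure (H i j) UNIV"
    by (rule irreducible_stochastic.intro) (rule assms)+
  obtain N \<eta> where N: "1 \<le> N" "0 < \<eta>" "\<eta> \<le> 1"
    "\<And>i. i < d \<Longrightarrow> i \<noteq> 0 \<Longrightarrow>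
       (\<Sum>j<d. taboo_vec d (\<lambda>i j. measure (H i j) UNIV) (\<lambda>k. if k = i then 1 else 0) avoid_zero N j) \<le> 1 - \<eta>"
    by (rule S.avoid_zero_contraction) blast
  have "zero_recurrent d (\<lambda>i j. measure (H i j) UNIV) N (min \<eta> (1/2))"
  proof (intro zero_recurrent.intro zero_recurrent_axioms.intro S.irreducible_stochastic_axioms)
    show "(\<Sum>j<d. taboo_vec d (\<lambda>i j. measure (H i j) UNIV) (\<lambda>k. if k = i then 1 else 0) avoid_zero N j)
        \<le> 1 - min \<eta> (1/2)" if "i < d" "i \<noteq> 0" for i
      using N(4)[OF that] min.cobounded1[of \<eta> "1/2"] by linarith
  qed (use N(1,2) in simp_all)
  moreover have "subexp_distribution F"
    by (intro subexp_distribution.intro nonneg_distribution.intro nonneg_distribution_axioms.intro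
        subexp_distribution_axioms.intro real_distribution.intro real_distribution_axioms.intro)
      (use Y in \<open>simp_all add: subexponential_def\<close>)
  ultimately have "MAP_subexp M d \<beta> H X J N (min \<eta> (1/2)) F"
    by (intro MAP_subexp.intro MAP_recurrent.intro MAP_subexp_axioms.intro MAP_process.intro map) simp_all
  then show ?thesis by (rule that)
qed

text \<open>As \<open>C\<close> may depend on \<open>c\<close>, the case
  \<open>c > 0\<close> only requires the tail ratio to be bounded, while for \<open>c = 0\<close> it must tend to \<open>0\<close>.\<close>
theorem lemma3p1:
  fixes M :: "'a measure" and d :: nat
    and \<beta> :: "nat \<Rightarrow> real measure" and H :: "nat \<Rightarrow> nat \<Rightarrow> real measure"
    and X :: "nat \<Rightarrow> 'a \<Rightarrow> real" and J :: "nat \<Rightarrow> 'a \<Rightarrow> nat"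
    and c :: real and F :: "real measure"
    and \<beta>t :: "nat \<Rightarrow> real" and Ht :: "nat \<Rightarrow> nat \<Rightarrow> real"
  assumes "d \<ge> 1"
    and map: "MAP M d \<beta> H X J"
    and stoch: "stochastic_mat d (\<lambda>i j. measure (H i j) UNIV)"
    and irr: "irreducible_mat d (\<lambda>i j. measure (H i j) UNIV)"
    and mean_int: "\<forall>i<d. \<forall>j<d. integrable (H i j) (\<lambda>x. x)"
    and drift: "\<forall>w. stationary_vec d (\<lambda>i j. measure (H i j) UNIV) w \<longrightarrow>
                 0 < (\<Sum>i<d. w i * (\<Sum>j<d. integral\<^sup>L (H i j) (\<lambda>x. x)))"
    and c_nonneg: "0 \<le> c"
    and Y: "subexponential F"
    and bt: "\<forall>i<d. 0 \<le> \<beta>t i"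
    and Htn: "\<forall>i<d. \<forall>j<d. 0 \<le> Ht i j"
    and tail_beta: "\<forall>i<d. Limsup at_top (\<lambda>x::real. ereal (measure (\<beta> i) {x<..} / measure F {x<..}))
                        \<le> ereal (c * \<beta>t i)"
    and tail_H: "\<forall>i<d. \<forall>j<d. Limsup at_top (\<lambda>x::real. ereal (measure (H i j) {x<..} / measure F {x<..}))
                        \<le> ereal (c * Ht i j)"
  shows "\<exists>C::real. 0 < C \<and> (\<forall>m\<in>{0::nat, 1}.
           Limsup at_top (\<lambda>x::real. ereal (measure M {\<omega>\<in>space M. DeltaB X J m \<omega> > x} / measure F {x<..}))
             \<le> ereal (c * C))"
proof -
  obtain N \<eta> where "MAP_subexp M d \<beta> H X J N \<eta> F"
    using MAP_subexp_exists[OF \<open>d \<ge> 1\<close> map stoch irr Y] by blast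
  then interpret MAP_subexp M d \<beta> H X J N \<eta> F .
  obtain K where K: "0 \<le> K"
    "\<forall>i<d. Limsup at_top (\<lambda>x. ereal (measure (\<beta> i) {x<..} / measure F {x<..})) \<le> ereal (c * K)"
    "\<forall>i<d. \<forall>j<d. Limsup at_top (\<lambda>x. ereal (measure (H i j) {x<..} / measure F {x<..})) \<le> ereal (c * K)"
    by (rule exists_uniform_Limsup_bound[OF c_nonneg bt Htn tail_beta tail_H])
  have tails: "\<exists>x1. kernel_tails_le (c * K + \<delta>) x1" if "0 < \<delta>" for \<delta>
    using exists_kernel_tails_le[OF K(2,3) that] .
  show ?thesis
  proof (cases "c = 0")
    case True
    then show ?thesis
      using Limsup_tail_DeltaB_le_0 tails by (intro exI[of _ 1]) (auto simp: zero_ereal_def)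
  next
    case False
    obtain x1 where "kernel_tails_le (c * K + 1) x1" using tails[of 1] by auto
    then obtain C where C: "\<forall>m\<in>{0, 1}.
        Limsup at_top (\<lambda>x. ereal (measure M {\<omega>\<in>space M. DeltaB X J m \<omega> > x} / measure F {x<..})) \<le> ereal C"
      using Limsup_tail_DeltaB_bounded[of "c * K + 1"] K(1) c_nonneg by auto
    have "ereal C \<le> ereal (c * (max C 1 / c))" using False c_nonneg by simp
    then show ?thesis
      using C False c_nonneg by (intro exI[of _ "max C 1 / c"]) (auto intro: order.trans)
  qed
qed

end
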